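(* Let $q\ge2$ be an integer, $\beta\ge0$, $c>0$ and $\kappa>0$. Writing $N=\mathcal Nq$, $$\lim_{\substack{\mathcal N\to\infty\\ K/N\to\kappa/2}}\frac1N\ln\mathbb E_{N,c}\big[\tilde Z_{(\mathcal N,q)}(\beta J)\,\big|\,|J|=K\big]=\mathcal P(\beta,\kappa,q)$$ and $$\lim_{\substack{\mathcal N\to\infty\\ K/N\to\kappa/2}}\frac1N\ln\mathbb E_{N,c}\big[\tilde Z_{(\mathcal N,q)}(\beta J)^2\,\big|\,|J|=K\big]=\max_{\mu\in\mathcal M_*([q]^2)}\phi^{(2)}(\beta,\kappa,q,\mu),$$ where $$\phi^{(2)}(\beta,\kappa,q,\mu)=s(\mu)+\frac\kappa2\ln\Big(1-\frac{2(1-e^{-\beta})}{q}+(1-e^{-\beta})^2\sum_{(r_1,r_2)\in[q]^2}\mu(\{(r_1,r_2)\})^2\Big).$$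
   Context: $[q]=\{1,\dots,q\}$. For $\sigma\in[q]^N$ and a real $N\times N$ matrix $J$, $H_N(\sigma,J)=\sum_{i,j=1}^N J_{ij}\delta(\sigma_i,\sigma_j)$ ($\delta$ Kronecker). Under $\mathbb P_{N,c}$ (expectation $\mathbb E_{N,c}$), $J$ is a random $N\times N$ matrix with independent entries each Poisson with mean $c/(2N)$; $|J|=\sum_{i,j=1}^NJ_{ij}$, and $\mathbb E_{N,c}[\,\cdot\,|\,|J|=K]$ is conditional expectation given $|J|=K$. For $N=\mathcal Nq$, the balanced configurations are $[q]^{(\mathcal N,q)}=\{\sigma\in[q]^N:\ \#\{i:\sigma_i=s\}=\mathcal N\text{ for each }s\in[q]\}$, and $\tilde Z_{(\mathcal N,q)}(\beta J)=\sum_{\sigma\in[q]^{(\mathcal N,q)}}e^{-\beta H_N(\sigma,J)}$. $\mathcal P(\beta,\kappa,q)=\ln q+\frac\kappa2\ln\big(1-\frac{1-e^{-\beta}}{q}\big)$. $\mathcal M_*([q]^2)$ is the set of probability measures on $[q]\times[q]$ both of whose marginals are uniform on $[q]$, and $s(\mu)=-\sum_{(r_1,r_2)}\mu(\{(r_1,r_2)\})\ln\mu(\{(r_1,r_2)\})$ (with $0\ln0=0$). The limits are taken along any sequences with $\mathcal N\to\infty$ and $K/N\to\kappa/2$. *)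

theory Defs
  imports "HOL-Probability.Probability"
begin

text \<open>Spins take values in [q] = {1..q}; sites are indexed by {0..<N}.
  A coupling matrix J is a function nat \<times> nat \<Rightarrow> nat, equal to 0 off {0..<N}^2.\<close>

definition sites :: "nat \<Rightarrow> nat set" where
  "sites N = {0..<N}"

definition hamiltonian :: "nat \<Rightarrow> (nat \<Rightarrow> nat) \<Rightarrow> (nat \<times> nat \<Rightarrow> nat) \<Rightarrow> real" where
  "hamiltonian N \<sigma> J = (\<Sum>i\<in>sites N. \<Sum>j\<in>sites N. real (J (i, j)) * (if \<sigma> i = \<sigma> j then 1 else 0))"

definition balanced_configs :: "nat \<Rightarrow> nat \<Rightarrow> (nat \<Rightarrow> nat) set" where
  "balanced_configs NN q =
     {\<sigma> \<in> sites (NN * q) \<rightarrow>\<^sub>E {1..q}. \<forall>s\<in>{1..q}. card {i \<in> sites (NN * q). \<sigma> i = s} = NN}"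

definition Ztilde :: "nat \<Rightarrow> nat \<Rightarrow> real \<Rightarrow> (nat \<times> nat \<Rightarrow> nat) \<Rightarrow> real" where
  "Ztilde NN q \<beta> J = (\<Sum>\<sigma>\<in>balanced_configs NN q. exp (- \<beta> * hamiltonian (NN * q) \<sigma> J))"

definition J_law :: "nat \<Rightarrow> real \<Rightarrow> (nat \<times> nat \<Rightarrow> nat) pmf" where
  "J_law N c = Pi_pmf (sites N \<times> sites N) 0 (\<lambda>_. poisson_pmf (c / (2 * real N)))"

definition total :: "nat \<Rightarrow> (nat \<times> nat \<Rightarrow> nat) \<Rightarrow> nat" where
  "total N J = (\<Sum>i\<in>sites N. \<Sum>j\<in>sites N. J (i, j))"

definition cond_exp_J :: "nat \<Rightarrow> real \<Rightarrow> nat \<Rightarrow> ((nat \<times> nat \<Rightarrow> nat) \<Rightarrow> real) \<Rightarrow> real" where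
  "cond_exp_J N c K f = measure_pmf.expectation (cond_pmf (J_law N c) {J. total N J = K}) f"

definition Pfun :: "real \<Rightarrow> real \<Rightarrow> nat \<Rightarrow> real" where
  "Pfun \<beta> \<kappa> q = ln (real q) + \<kappa> / 2 * ln (1 - (1 - exp (- \<beta>)) / real q)"

definition Mstar :: "nat \<Rightarrow> (nat \<times> nat \<Rightarrow> real) set" where
  "Mstar q = {\<mu>. (\<forall>x. 0 \<le> \<mu> x) \<and> (\<forall>x. x \<notin> {1..q} \<times> {1..q} \<longrightarrow> \<mu> x = 0)
      \<and> (\<forall>r\<in>{1..q}. (\<Sum>r2\<in>{1..q}. \<mu> (r, r2)) = 1 / real q)
      \<and> (\<forall>r\<in>{1..q}. (\<Sum>r1\<in>{1..q}. \<mu> (r1, r)) = 1 / real q)}"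

definition entropy2 :: "nat \<Rightarrow> (nat \<times> nat \<Rightarrow> real) \<Rightarrow> real" where
  "entropy2 q \<mu> = - (\<Sum>x\<in>{1..q} \<times> {1..q}. if \<mu> x = 0 then 0 else \<mu> x * ln (\<mu> x))"

definition phi2 :: "real \<Rightarrow> real \<Rightarrow> nat \<Rightarrow> (nat \<times> nat \<Rightarrow> real) \<Rightarrow> real" where
  "phi2 \<beta> \<kappa> q \<mu> = entropy2 q \<mu> + \<kappa> / 2 * ln (1 - 2 * (1 - exp (- \<beta>)) / real q
       + (1 - exp (- \<beta>))^2 * (\<Sum>x\<in>{1..q} \<times> {1..q}. (\<mu> x)^2))"

end

theory Submission
  imports Defs "HOL-Combinatorics.Multiset_Permutations" "HOL-Real_Asymp.Real_Asymp"
begin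

text \<open>Conditioned on \<open>|J| = K\<close>, the couplings are a multinomial sample of \<open>K\<close> uniformly
  chosen ordered pairs of sites, so the conditional mean of \<open>\<Prod>x. g x ^ J x\<close> is the \<open>K\<close>-th power
  of the mean of \<open>g\<close> over all pairs. For a balanced configuration the mean edge weight is
  \<open>1 - (1 - exp (- \<beta>)) / q\<close>, so the first moment is this number to the power \<open>K\<close> times the
  multinomial number of balanced configurations, and Stirling's bounds give the first limit.

  For two replicas the mean edge weight depends only on their overlap matrix \<open>n\<close>, so the second
  moment is a sum over the at most \<open>(N + 1) ^ (q * q)\<close> possible overlap matrices of terms of size
  \<open>exp (N * phi2 (n / N) + O (log N))\<close>, and the largest term dominates. The maximiser of \<open>phi2\<close>
  over \<open>Mstar q\<close> bounds every term from above. For the lower bound the maximiser is approximated by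
  couplings with all entries bounded away from \<open>0\<close>, and these are rounded to overlap matrices by
  flooring the upper left \<open>(q - 1) \<times> (q - 1)\<close> block and completing the last row and column.\<close>

section \<open>Compositions and the multinomial theorem\<close>

definition compositions :: "'a set \<Rightarrow> nat \<Rightarrow> ('a \<Rightarrow> nat) set" where
  "compositions A K = {J. (\<forall>x. x \<notin> A \<longrightarrow> J x = 0) \<and> sum J A = K}"

lemma finite_compositions:
  assumes "finite A"
  shows "finite (compositions A K)"
proof (rule finite_subset)
  show "compositions A K \<subseteq> (\<lambda>f x. if x \<in> A then f x else 0) ` (A \<rightarrow>\<^sub>E {0..K})"
  proof
    fix J assume J: "J \<in> compositions A K"
    have "J x \<le> K" if "x \<in> A" for x
      using J that member_le_sum[of x A J] assms by (auto simp: compositions_def)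
    moreover have "J = (\<lambda>x. if x \<in> A then restrict J A x else 0)"
      using J by (auto simp: compositions_def)
    ultimately show "J \<in> (\<lambda>f x. if x \<in> A then f x else 0) ` (A \<rightarrow>\<^sub>E {0..K})"
      by (intro image_eqI[where x = "restrict J A"]) auto
  qed
qed (use assms in \<open>auto intro!: finite_PiE\<close>)

lemma sum_compositions_insert:
  assumes "finite A" "a \<notin> A"
  shows "(\<Sum>J\<in>compositions (insert a A) K. f J) = (\<Sum>j\<le>K. \<Sum>J\<in>compositions A (K - j). f (J(a := j)))"
proof -
  have "(\<Sum>J\<in>compositions (insert a A) K. f J) = (\<Sum>(j, J)\<in>Sigma {..K} (\<lambda>j. compositions A (K - j)). f (J(a := j)))"
  proof (rule sum.reindex_bij_witness[where i = "\<lambda>(j, J). J(a := j)" and j = "\<lambda>J. (J a, J(a := 0))"])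
    fix jJ assume "jJ \<in> Sigma {..K} (\<lambda>j. compositions A (K - j))"
    then obtain j J where jJ: "jJ = (j, J)" "j \<le> K" "J \<in> compositions A (K - j)" by auto
    moreover have "J a = 0" using jJ assms by (auto simp: compositions_def)
    moreover have "sum (J(a := j)) A = sum J A" using assms by (intro sum.cong) auto
    ultimately show "(case (case jJ of (j, J) \<Rightarrow> J(a := j)) of J \<Rightarrow> (J a, J(a := 0))) = jJ"
      and "(case jJ of (j, J) \<Rightarrow> J(a := j)) \<in> compositions (insert a A) K"
      using assms by (auto simp: compositions_def)
  next
    fix J assume J: "J \<in> compositions (insert a A) K"
    have "sum (J(a := 0)) A = sum J A" using assms by (intro sum.cong) auto
    then show "(J a, J(a := 0)) \<in> Sigma {..K} (\<lambda>j. compositions A (K - j))"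
      using J assms by (auto simp: compositions_def)
  qed auto
  also have "\<dots> = (\<Sum>j\<le>K. \<Sum>J\<in>compositions A (K - j). f (J(a := j)))"
    by (rule sum.Sigma[symmetric]) (auto intro: finite_compositions assms)
  finally show ?thesis .
qed

theorem multinomial_compositions:
  fixes g :: "'a \<Rightarrow> real"
  assumes "finite A"
  shows "(\<Sum>J\<in>compositions A K. \<Prod>x\<in>A. g x ^ J x / fact (J x)) = sum g A ^ K / fact K"
  using assms
proof (induction A arbitrary: K rule: finite_induct)
  case empty
  have "compositions ({} :: 'a set) K = (if K = 0 then {\<lambda>_. 0} else {})" by (auto simp: compositions_def)
  then show ?case by (cases "K = 0") simp_all
next
  case (insert a A)
  have "(\<Prod>x\<in>A. g x ^ (J(a := j)) x / fact ((J(a := j)) x)) = (\<Prod>x\<in>A. g x ^ J x / fact (J x))"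
    for j and J :: "'a \<Rightarrow> nat"
    using insert(2) by (intro prod.cong) auto
  then have "(\<Sum>J\<in>compositions (insert a A) K. \<Prod>x\<in>insert a A. g x ^ J x / fact (J x))
      = (\<Sum>j\<le>K. g a ^ j / fact j * (\<Sum>J\<in>compositions A (K - j). \<Prod>x\<in>A. g x ^ J x / fact (J x)))"
    unfolding sum_compositions_insert[OF insert(1,2)] sum_distrib_left
    using insert(1,2) by simp
  also have "\<dots> = (\<Sum>j\<le>K. real (K choose j) * g a ^ j * sum g A ^ (K - j)) / fact K"
    unfolding insert.IH sum_divide_distrib
    by (intro sum.cong refl) (simp add: binomial_fact field_simps)
  also have "\<dots> = sum g (insert a A) ^ K / fact K"
    using insert(1,2) by (simp add: binomial_ring)
  finally show ?case .
qed

section \<open>The couplings conditioned on their total\<close>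

lemma expectation_cond_pmf_proportional:
  fixes p :: "'a pmf" and w f :: "'a \<Rightarrow> real"
  assumes T: "finite T" "T \<subseteq> S" "set_pmf p \<inter> S \<subseteq> T" and ne: "set_pmf p \<inter> S \<noteq> {}"
    and pmf_eq: "\<And>x. x \<in> T \<Longrightarrow> pmf p x = C * w x"
  shows "measure_pmf.expectation (cond_pmf p S) f = (\<Sum>x\<in>T. w x * f x) / (\<Sum>x\<in>T. w x)"
proof -
  have "S \<inter> set_pmf p = T \<inter> set_pmf p" using T by blast
  then have "measure_pmf.prob p S = measure_pmf.prob p T" by (metis measure_Int_set_pmf)
  also have "\<dots> = C * (\<Sum>x\<in>T. w x)"
    using T by (simp add: measure_measure_pmf_finite pmf_eq sum_distrib_left)
  finally have prob_S: "measure_pmf.prob p S = C * (\<Sum>x\<in>T. w x)" .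
  then have "C * (\<Sum>x\<in>T. w x) \<noteq> 0" using measure_measure_pmf_not_zero[OF ne] by simp
  have "measure_pmf.expectation (cond_pmf p S) f = (\<Sum>x\<in>T. f x * pmf (cond_pmf p S) x)"
    using T ne by (intro integral_measure_pmf_real) auto
  also have "\<dots> = (\<Sum>x\<in>T. f x * (C * w x) / (C * (\<Sum>x\<in>T. w x)))"
    using T(2) by (intro sum.cong refl) (auto simp: pmf_cond[OF ne] pmf_eq prob_S)
  also have "\<dots> = (\<Sum>x\<in>T. w x * f x) / (\<Sum>x\<in>T. w x)"
    using \<open>C * (\<Sum>x\<in>T. w x) \<noteq> 0\<close> by (simp add: sum_divide_distrib mult_ac)
  finally show ?thesis .
qed

abbreviation site_pairs :: "nat \<Rightarrow> (nat \<times> nat) set" where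
  "site_pairs N \<equiv> sites N \<times> sites N"

lemma finite_sites [simp]: "finite (sites N)"
  by (simp add: sites_def)

lemma card_site_pairs: "card (site_pairs N) = N * N"
  by (simp add: sites_def)

lemma total_eq_sum_site_pairs: "total N J = sum J (site_pairs N)"
  unfolding total_def by (simp add: sum.cartesian_product)

definition inv_fact_weight :: "'a set \<Rightarrow> ('a \<Rightarrow> nat) \<Rightarrow> real" where
  "inv_fact_weight A J = (\<Prod>x\<in>A. 1 / fact (J x))"

lemma pmf_J_law:
  assumes "c > 0" "N > 0" "J \<in> compositions (site_pairs N) K"
  shows "pmf (J_law N c) J
    = (c / (2 * real N)) ^ K * exp (- c / (2 * real N)) ^ (N * N) * inv_fact_weight (site_pairs N) J"
proof -
  define l where "l = c / (2 * real N)"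
  have "l > 0" using assms by (simp add: l_def)
  have "pmf (J_law N c) J = (\<Prod>x\<in>site_pairs N. l ^ J x / fact (J x) * exp (- l))"
    using assms(3) \<open>l > 0\<close> unfolding J_law_def l_def[symmetric]
    by (subst pmf_Pi) (auto simp: compositions_def)
  also have "\<dots> = (\<Prod>x\<in>site_pairs N. l ^ J x * exp (- l) * (1 / fact (J x)))"
    by simp
  also have "\<dots> = (\<Prod>x\<in>site_pairs N. l ^ J x) * exp (- l) ^ (N * N) * inv_fact_weight (site_pairs N) J"
    by (simp only: prod.distrib inv_fact_weight_def prod_constant card_site_pairs)
  also have "(\<Prod>x\<in>site_pairs N. l ^ J x) = l ^ K"
    using assms(3) by (simp add: compositions_def flip: power_sum)
  finally show ?thesis by (simp add: l_def)
qed

theorem cond_exp_J_eq_weighted_sum: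
  assumes "c > 0" "N > 0"
  shows "cond_exp_J N c K f
    = (\<Sum>J\<in>compositions (site_pairs N) K. inv_fact_weight (site_pairs N) J * f J)
      / (\<Sum>J\<in>compositions (site_pairs N) K. inv_fact_weight (site_pairs N) J)"
  unfolding cond_exp_J_def
proof (rule expectation_cond_pmf_proportional
    [where C = "(c / (2 * real N)) ^ K * exp (- c / (2 * real N)) ^ (N * N)"])
  show "finite (compositions (site_pairs N) K)" by (simp add: finite_compositions)
  show "compositions (site_pairs N) K \<subseteq> {J. total N J = K}"
    by (auto simp: compositions_def total_eq_sum_site_pairs)
  show "set_pmf (J_law N c) \<inter> {J. total N J = K} \<subseteq> compositions (site_pairs N) K"
    using set_Pi_pmf_subset[of "site_pairs N" 0] unfolding J_law_def
    by (auto simp: compositions_def total_eq_sum_site_pairs)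
  define J0 where "J0 = (\<lambda>x :: nat \<times> nat. if x = (0, 0) then K else 0)"
  have "(0, 0) \<in> site_pairs N" using assms by (simp add: sites_def)
  then have J0: "J0 \<in> compositions (site_pairs N) K"
    by (auto simp: compositions_def J0_def sum.delta)
  then have "J0 \<in> set_pmf (J_law N c)"
    using assms by (simp add: set_pmf_iff pmf_J_law inv_fact_weight_def)
  with J0 show "set_pmf (J_law N c) \<inter> {J. total N J = K} \<noteq> {}"
    by (auto simp: compositions_def total_eq_sum_site_pairs)
qed (use assms in \<open>simp add: pmf_J_law\<close>)

theorem cond_exp_J_sum_prod_power:
  fixes g :: "'k \<Rightarrow> nat \<times> nat \<Rightarrow> real"
  assumes "c > 0" "N > 0"
  shows "cond_exp_J N c K (\<lambda>J. \<Sum>k\<in>I. \<Prod>x\<in>site_pairs N. g k x ^ J x)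
    = (\<Sum>k\<in>I. (sum (g k) (site_pairs N) / real N ^ 2) ^ K)"
proof -
  have weights: "(\<Sum>J\<in>compositions (site_pairs N) K. inv_fact_weight (site_pairs N) J)
      = (real N ^ 2) ^ K / fact K"
    using multinomial_compositions[of "site_pairs N" "\<lambda>_. 1" K]
    by (simp add: inv_fact_weight_def card_site_pairs power2_eq_square)
  have "(\<Sum>J\<in>compositions (site_pairs N) K.
          inv_fact_weight (site_pairs N) J * (\<Sum>k\<in>I. \<Prod>x\<in>site_pairs N. g k x ^ J x))
      = (\<Sum>k\<in>I. \<Sum>J\<in>compositions (site_pairs N) K. \<Prod>x\<in>site_pairs N. g k x ^ J x / fact (J x))"
    by (simp add: sum_distrib_left inv_fact_weight_def prod.distrib[symmetric] sum.swap[of _ I]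
        divide_inverse mult_ac)
  also have "\<dots> = (\<Sum>k\<in>I. sum (g k) (site_pairs N) ^ K / fact K)"
    by (simp add: multinomial_compositions)
  finally have numerator: "(\<Sum>J\<in>compositions (site_pairs N) K.
          inv_fact_weight (site_pairs N) J * (\<Sum>k\<in>I. \<Prod>x\<in>site_pairs N. g k x ^ J x))
      = (\<Sum>k\<in>I. sum (g k) (site_pairs N) ^ K / fact K)" .
  show ?thesis
    unfolding cond_exp_J_eq_weighted_sum[OF assms] weights numerator sum_divide_distrib[where A = I]
    by (intro sum.cong refl) (simp only: power_divide, use assms in simp)
qed

section \<open>Moments as sums over configurations\<close>

definition edge_weight :: "real \<Rightarrow> (nat \<Rightarrow> nat) \<Rightarrow> nat \<times> nat \<Rightarrow> real" where
  "edge_weight \<beta> \<sigma> x = (if \<sigma> (fst x) = \<sigma> (snd x) then exp (- \<beta>) else 1)"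

lemma exp_hamiltonian:
  "exp (- \<beta> * hamiltonian N \<sigma> J) = (\<Prod>x\<in>site_pairs N. edge_weight \<beta> \<sigma> x ^ J x)"
proof -
  have "hamiltonian N \<sigma> J = (\<Sum>x\<in>site_pairs N. real (J x) * (if \<sigma> (fst x) = \<sigma> (snd x) then 1 else 0))"
    by (simp add: hamiltonian_def sum.cartesian_product case_prod_beta)
  then have "exp (- \<beta> * hamiltonian N \<sigma> J)
      = (\<Prod>x\<in>site_pairs N. exp (real (J x) * (- \<beta> * (if \<sigma> (fst x) = \<sigma> (snd x) then 1 else 0))))"
    by (simp add: sum_distrib_left exp_sum mult_ac)
  also have "\<dots> = (\<Prod>x\<in>site_pairs N. edge_weight \<beta> \<sigma> x ^ J x)"
    by (intro prod.cong refl) (auto simp: edge_weight_def simp flip: exp_of_nat_mult)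
  finally show ?thesis .
qed

lemma Ztilde_eq_sum_prod:
  "Ztilde NN q \<beta> J = (\<Sum>\<sigma>\<in>balanced_configs NN q. \<Prod>x\<in>site_pairs (NN * q). edge_weight \<beta> \<sigma> x ^ J x)"
  unfolding Ztilde_def exp_hamiltonian ..

lemma cond_exp_Ztilde:
  assumes "c > 0" "NN * q > 0"
  shows "cond_exp_J (NN * q) c K (Ztilde NN q \<beta>) = (\<Sum>\<sigma>\<in>balanced_configs NN q.
     (sum (edge_weight \<beta> \<sigma>) (site_pairs (NN * q)) / real (NN * q) ^ 2) ^ K)"
  unfolding Ztilde_eq_sum_prod by (rule cond_exp_J_sum_prod_power[OF assms])

lemma cond_exp_Ztilde_sq:
  assumes "c > 0" "NN * q > 0"
  shows "cond_exp_J (NN * q) c K (\<lambda>J. (Ztilde NN q \<beta> J)\<^sup>2)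
    = (\<Sum>(\<sigma>, \<tau>)\<in>balanced_configs NN q \<times> balanced_configs NN q.
        (sum (\<lambda>x. edge_weight \<beta> \<sigma> x * edge_weight \<beta> \<tau> x) (site_pairs (NN * q))
          / real (NN * q) ^ 2) ^ K)"
proof -
  have "(Ztilde NN q \<beta> J)\<^sup>2 = (\<Sum>(\<sigma>, \<tau>)\<in>balanced_configs NN q \<times> balanced_configs NN q.
          \<Prod>x\<in>site_pairs (NN * q). (edge_weight \<beta> \<sigma> x * edge_weight \<beta> \<tau> x) ^ J x)" for J
    unfolding Ztilde_eq_sum_prod power2_eq_square sum_product sum.cartesian_product
    by (simp add: power_mult_distrib prod.distrib)
  then show ?thesis
    using cond_exp_J_sum_prod_power[OF assms, where g = "\<lambda>(\<sigma>, \<tau>) x. edge_weight \<beta> \<sigma> x * edge_weight \<beta> \<tau> x"]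
    by (simp add: case_prod_beta)
qed

lemma card_monochromatic_site_pairs:
  assumes "finite T" "\<And>i. i \<in> sites N \<Longrightarrow> \<rho> i \<in> T"
  shows "card {x\<in>site_pairs N. \<rho> (fst x) = \<rho> (snd x)} = (\<Sum>t\<in>T. card {i\<in>sites N. \<rho> i = t} ^ 2)"
proof -
  have "{x\<in>site_pairs N. \<rho> (fst x) = \<rho> (snd x)}
      = (\<Union>t\<in>T. {i\<in>sites N. \<rho> i = t} \<times> {i\<in>sites N. \<rho> i = t})"
    using assms(2) by auto
  also have "card \<dots> = (\<Sum>t\<in>T. card ({i\<in>sites N. \<rho> i = t} \<times> {i\<in>sites N. \<rho> i = t}))"
    using assms(1) by (intro card_UN_disjoint) auto
  finally show ?thesis by (simp add: card_cartesian_product power2_eq_square)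
qed

lemma sum_edge_weight:
  assumes "finite T" "\<And>i. i \<in> sites N \<Longrightarrow> \<sigma> i \<in> T"
  shows "sum (edge_weight \<beta> \<sigma>) (site_pairs N)
    = real N ^ 2 - (1 - exp (- \<beta>)) * (\<Sum>t\<in>T. real (card {i\<in>sites N. \<sigma> i = t}) ^ 2)"
proof -
  have "sum (edge_weight \<beta> \<sigma>) (site_pairs N)
      = (\<Sum>x\<in>site_pairs N. 1 - (1 - exp (- \<beta>)) * (if \<sigma> (fst x) = \<sigma> (snd x) then 1 else 0))"
    by (intro sum.cong) (auto simp: edge_weight_def)
  also have "\<dots> = real N ^ 2 - (1 - exp (- \<beta>)) * card {x\<in>site_pairs N. \<sigma> (fst x) = \<sigma> (snd x)}"
    by (simp add: sum_subtractf card_site_pairs power2_eq_square flip: sum_distrib_left sum.inter_filter)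
  also have "real (card {x\<in>site_pairs N. \<sigma> (fst x) = \<sigma> (snd x)})
      = (\<Sum>t\<in>T. real (card {i\<in>sites N. \<sigma> i = t}) ^ 2)"
    using arg_cong[OF card_monochromatic_site_pairs[OF assms], where f = real] by simp
  finally show ?thesis .
qed

section \<open>Counting functions with prescribed fibre sizes\<close>

lemma bij_betw_PiE_upt_lists:
  "bij_betw (\<lambda>\<rho>. map \<rho> [0..<N]) ({0..<N} \<rightarrow>\<^sub>E T) {xs. set xs \<subseteq> T \<and> length xs = N}"
proof (rule bij_betw_byWitness[where f' = "\<lambda>xs i. if i < N then xs ! i else undefined"])
  show "\<forall>\<rho>\<in>{0..<N} \<rightarrow>\<^sub>E T. (\<lambda>i. if i < N then map \<rho> [0..<N] ! i else undefined) = \<rho>"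
    by (auto simp: PiE_def extensional_def)
  show "\<forall>xs\<in>{xs. set xs \<subseteq> T \<and> length xs = N}. map (\<lambda>i. if i < N then xs ! i else undefined) [0..<N] = xs"
    by (auto intro!: nth_equalityI)
  show "(\<lambda>\<rho>. map \<rho> [0..<N]) ` ({0..<N} \<rightarrow>\<^sub>E T) \<subseteq> {xs. set xs \<subseteq> T \<and> length xs = N}"
    by auto
  show "(\<lambda>xs i. if i < N then xs ! i else undefined) ` {xs. set xs \<subseteq> T \<and> length xs = N} \<subseteq> {0..<N} \<rightarrow>\<^sub>E T"
    by (auto simp: nth_mem subsetD)
qed

lemma count_mset_map_upt: "count (mset (map \<rho> [0..<N])) t = card {i\<in>{0..<N}. \<rho> i = t}"
  unfolding count_mset count_list_eq_length_filter length_filter_conv_card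
  by (rule arg_cong[where f = card]) auto

theorem card_functions_with_fibre_counts:
  fixes m :: "'a \<Rightarrow> nat"
  assumes T: "finite T" and N: "sum m T = N"
  shows "real (card {\<rho> \<in> {0..<N} \<rightarrow>\<^sub>E T. \<forall>t\<in>T. card {i\<in>{0..<N}. \<rho> i = t} = m t})
    = fact N / (\<Prod>t\<in>T. fact (m t))"
proof -
  define M where "M = (\<Sum>t\<in>T. replicate_mset (m t) t)"
  have count_M: "count M t = (if t \<in> T then m t else 0)" for t
    unfolding M_def count_sum using T by (simp add: sum.delta)
  have set_M: "set_mset M = {t\<in>T. m t > 0}"
    by (auto simp: count_M simp flip: count_greater_zero_iff split: if_splits)
  have "size M = (\<Sum>t\<in>{t\<in>T. m t > 0}. m t)"
    by (simp add: size_multiset_overloaded_eq set_M count_M)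
  also have "\<dots> = sum m T"
    using T by (simp add: sum.inter_filter) (metis not_gr0)
  finally have size_M: "size M = N" using N by simp
  have prod_M: "(\<Prod>t\<in>set_mset M. fact (count M t)) = (\<Prod>t\<in>T. fact (m t) :: nat)"
    using T by (simp add: set_M count_M prod.inter_filter) (metis fact_0 not_gr0)
  have counts_iff: "(\<forall>t\<in>T. card {i\<in>{0..<N}. \<rho> i = t} = m t) \<longleftrightarrow> mset (map \<rho> [0..<N]) = M"
    if "\<rho> \<in> {0..<N} \<rightarrow>\<^sub>E T" for \<rho>
    using that by (auto simp: multiset_eq_iff count_mset_map_upt count_M simp del: mset_map)
  have "set xs \<subseteq> T \<and> length xs = N" if "mset xs = M" for xs
  proof -
    have "set xs = set_mset M" "length xs = size M" using that by auto
    then show ?thesis using set_M size_M by auto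
  qed
  then have perms_M: "{xs \<in> {xs. set xs \<subseteq> T \<and> length xs = N}. mset xs = M} = permutations_of_multiset M"
    by (auto simp: permutations_of_multiset_def)
  define S where "S = {\<rho> \<in> {0..<N} \<rightarrow>\<^sub>E T. \<forall>t\<in>T. card {i\<in>{0..<N}. \<rho> i = t} = m t}"
  have "bij_betw (\<lambda>\<rho>. map \<rho> [0..<N]) S (permutations_of_multiset M)"
    unfolding perms_M[symmetric] S_def
    by (rule bij_betw_Collect[OF bij_betw_PiE_upt_lists]) (simp only: counts_iff)
  then have "card S * (\<Prod>t\<in>T. fact (m t)) = fact N"
    using card_permutations_of_multiset_aux[of M] prod_M size_M by (simp add: bij_betw_same_card)
  then have "real (card S) * (\<Prod>t\<in>T. fact (m t)) = fact N"
    using arg_cong[where f = real] by fastforce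
  moreover have "(\<Prod>t\<in>T. fact (m t) :: real) > 0" by (simp add: prod_pos)
  ultimately show ?thesis unfolding S_def by (simp add: field_simps)
qed

section \<open>Balanced configurations and overlap matrices\<close>

abbreviation colour_pairs :: "nat \<Rightarrow> (nat \<times> nat) set" where
  "colour_pairs q \<equiv> {1..q} \<times> {1..q}"

definition overlap :: "nat \<Rightarrow> (nat \<Rightarrow> nat) \<Rightarrow> (nat \<Rightarrow> nat) \<Rightarrow> nat \<times> nat \<Rightarrow> nat" where
  "overlap N \<sigma> \<tau> x = card {i\<in>sites N. (\<sigma> i, \<tau> i) = x}"

definition balanced_matrices :: "nat \<Rightarrow> nat \<Rightarrow> (nat \<times> nat \<Rightarrow> nat) set" where
  "balanced_matrices NN q = {n. (\<forall>x. x \<notin> colour_pairs q \<longrightarrow> n x = 0)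
     \<and> (\<forall>r\<in>{1..q}. (\<Sum>s\<in>{1..q}. n (r, s)) = NN) \<and> (\<forall>s\<in>{1..q}. (\<Sum>r\<in>{1..q}. n (r, s)) = NN)}"

lemma balanced_matrices_outside: "n \<in> balanced_matrices NN q \<Longrightarrow> x \<notin> colour_pairs q \<Longrightarrow> n x = 0"
  unfolding balanced_matrices_def by blast

lemma sum_balanced_matrix:
  assumes "n \<in> balanced_matrices NN q"
  shows "sum n (colour_pairs q) = NN * q"
proof -
  have "sum n (colour_pairs q) = (\<Sum>r\<in>{1..q}. \<Sum>s\<in>{1..q}. n (r, s))"
    by (simp add: sum.cartesian_product)
  also have "\<dots> = (\<Sum>r\<in>{1..q}. NN)"
    using assms by (intro sum.cong) (auto simp: balanced_matrices_def)
  finally show ?thesis by simp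
qed

lemma balanced_configs_range:
  "\<sigma> \<in> balanced_configs NN q \<Longrightarrow> i \<in> sites (NN * q) \<Longrightarrow> \<sigma> i \<in> {1..q}"
  by (auto simp: balanced_configs_def)

lemma balanced_configs_fibre:
  "\<sigma> \<in> balanced_configs NN q \<Longrightarrow> r \<in> {1..q} \<Longrightarrow> card {i\<in>sites (NN * q). \<sigma> i = r} = NN"
  by (auto simp: balanced_configs_def)

lemma finite_balanced_configs: "finite (balanced_configs NN q)"
  unfolding balanced_configs_def by (rule finite_subset[of _ "sites (NN * q) \<rightarrow>\<^sub>E {1..q}"]) (auto intro: finite_PiE)

lemma card_balanced_configs: "real (card (balanced_configs NN q)) = fact (NN * q) / fact NN ^ q"
  using card_functions_with_fibre_counts[of "{1..q}" "\<lambda>_. NN" "NN * q"]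
  by (simp add: balanced_configs_def sites_def)

lemma card_balanced_configs_pos: "real (card (balanced_configs NN q)) > 0"
  unfolding card_balanced_configs by simp

lemma mean_edge_weight_balanced:
  assumes "\<sigma> \<in> balanced_configs NN q" "NN * q > 0"
  shows "sum (edge_weight \<beta> \<sigma>) (site_pairs (NN * q)) / real (NN * q) ^ 2 = 1 - (1 - exp (- \<beta>)) / real q"
proof -
  have "sum (edge_weight \<beta> \<sigma>) (site_pairs (NN * q)) = real (NN * q) ^ 2 - (1 - exp (- \<beta>)) * (real q * real NN ^ 2)"
    using balanced_configs_range[OF assms(1)] balanced_configs_fibre[OF assms(1)]
    by (simp add: sum_edge_weight[of "{1..q}"])
  then show ?thesis using assms(2) by (simp add: field_simps power2_eq_square)
qed

lemma overlap_row_sum: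
  assumes "\<And>i. i \<in> sites N \<Longrightarrow> \<tau> i \<in> {1..q}"
  shows "(\<Sum>s\<in>{1..q}. overlap N \<sigma> \<tau> (r, s)) = card {i\<in>sites N. \<sigma> i = r}"
proof -
  have "{i\<in>sites N. \<sigma> i = r} = (\<Union>s\<in>{1..q}. {i\<in>sites N. (\<sigma> i, \<tau> i) = (r, s)})"
    using assms by auto
  then have "card {i\<in>sites N. \<sigma> i = r} = (\<Sum>s\<in>{1..q}. card {i\<in>sites N. (\<sigma> i, \<tau> i) = (r, s)})"
    by (simp only:) (rule card_UN_disjoint, auto)
  then show ?thesis by (simp add: overlap_def)
qed

lemma overlap_col_sum:
  assumes "\<And>i. i \<in> sites N \<Longrightarrow> \<sigma> i \<in> {1..q}"
  shows "(\<Sum>r\<in>{1..q}. overlap N \<sigma> \<tau> (r, s)) = card {i\<in>sites N. \<tau> i = s}"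
proof -
  have "{i\<in>sites N. \<tau> i = s} = (\<Union>r\<in>{1..q}. {i\<in>sites N. (\<sigma> i, \<tau> i) = (r, s)})"
    using assms by auto
  then have "card {i\<in>sites N. \<tau> i = s} = (\<Sum>r\<in>{1..q}. card {i\<in>sites N. (\<sigma> i, \<tau> i) = (r, s)})"
    by (simp only:) (rule card_UN_disjoint, auto)
  then show ?thesis by (simp add: overlap_def)
qed

lemma overlap_outside:
  assumes "\<And>i. i \<in> sites N \<Longrightarrow> \<sigma> i \<in> {1..q}" "\<And>i. i \<in> sites N \<Longrightarrow> \<tau> i \<in> {1..q}"
    and "x \<notin> colour_pairs q"
  shows "overlap N \<sigma> \<tau> x = 0"
  using assms unfolding overlap_def by (auto simp: card_eq_0_iff)

lemma overlap_balanced_matrices: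
  assumes \<sigma>: "\<sigma> \<in> balanced_configs NN q" and \<tau>: "\<tau> \<in> balanced_configs NN q"
  shows "overlap (NN * q) \<sigma> \<tau> \<in> balanced_matrices NN q"
  unfolding balanced_matrices_def
proof (intro CollectI conjI allI impI ballI)
  fix x assume "x \<notin> colour_pairs q"
  then show "overlap (NN * q) \<sigma> \<tau> x = 0"
    using balanced_configs_range[OF \<sigma>] balanced_configs_range[OF \<tau>] by (intro overlap_outside)
next
  fix r assume "r \<in> {1..q}"
  then show "(\<Sum>s\<in>{1..q}. overlap (NN * q) \<sigma> \<tau> (r, s)) = NN"
    using overlap_row_sum[OF balanced_configs_range[OF \<tau>]] balanced_configs_fibre[OF \<sigma>] by simp
next
  fix s assume "s \<in> {1..q}"
  then show "(\<Sum>r\<in>{1..q}. overlap (NN * q) \<sigma> \<tau> (r, s)) = NN"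
    using overlap_col_sum[OF balanced_configs_range[OF \<sigma>]] balanced_configs_fibre[OF \<tau>] by simp
qed

definition pair_edge_mean :: "real \<Rightarrow> nat \<Rightarrow> (nat \<times> nat \<Rightarrow> real) \<Rightarrow> real" where
  "pair_edge_mean \<beta> q \<mu> = 1 - 2 * (1 - exp (- \<beta>)) / real q + (1 - exp (- \<beta>))\<^sup>2 * (\<Sum>x\<in>colour_pairs q. (\<mu> x)\<^sup>2)"

lemma phi2_eq_pair_edge_mean: "phi2 \<beta> \<kappa> q \<mu> = entropy2 q \<mu> + \<kappa> / 2 * ln (pair_edge_mean \<beta> q \<mu>)"
  by (simp add: phi2_def pair_edge_mean_def)

lemma mean_edge_weight_product:
  assumes \<sigma>: "\<sigma> \<in> balanced_configs NN q" and \<tau>: "\<tau> \<in> balanced_configs NN q" and N: "NN * q > 0"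
  shows "sum (\<lambda>x. edge_weight \<beta> \<sigma> x * edge_weight \<beta> \<tau> x) (site_pairs (NN * q)) / real (NN * q) ^ 2
    = pair_edge_mean \<beta> q (\<lambda>x. real (overlap (NN * q) \<sigma> \<tau> x) / real (NN * q))"
proof -
  define N where "N = NN * q"
  define a where "a = 1 - exp (- \<beta>)"
  define \<rho> where "\<rho> = (\<lambda>i. (\<sigma> i, \<tau> i))"
  have "edge_weight \<beta> \<sigma> x * edge_weight \<beta> \<tau> x
      = edge_weight \<beta> \<sigma> x + edge_weight \<beta> \<tau> x - 1 + a\<^sup>2 * (if \<rho> (fst x) = \<rho> (snd x) then 1 else 0)" for x
    by (simp add: edge_weight_def a_def \<rho>_def power2_eq_square algebra_simps)
  then have "sum (\<lambda>x. edge_weight \<beta> \<sigma> x * edge_weight \<beta> \<tau> x) (site_pairs N)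
      = sum (edge_weight \<beta> \<sigma>) (site_pairs N) + sum (edge_weight \<beta> \<tau>) (site_pairs N) - real N ^ 2
        + a\<^sup>2 * card {x\<in>site_pairs N. \<rho> (fst x) = \<rho> (snd x)}"
    by (simp add: sum.distrib sum_subtractf card_site_pairs power2_eq_square
        flip: sum_distrib_left sum.inter_filter)
  also have "card {x\<in>site_pairs N. \<rho> (fst x) = \<rho> (snd x)} = (\<Sum>t\<in>colour_pairs q. overlap N \<sigma> \<tau> t ^ 2)"
    using balanced_configs_range[OF \<sigma>] balanced_configs_range[OF \<tau>]
    by (subst card_monochromatic_site_pairs[of "colour_pairs q"]) (auto simp: N_def \<rho>_def overlap_def)
  also have "sum (edge_weight \<beta> \<sigma>) (site_pairs N) = real N ^ 2 * (1 - a / real q)"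
    using mean_edge_weight_balanced[OF \<sigma> N, of \<beta>] N by (simp add: N_def a_def field_simps)
  also have "sum (edge_weight \<beta> \<tau>) (site_pairs N) = real N ^ 2 * (1 - a / real q)"
    using mean_edge_weight_balanced[OF \<tau> N, of \<beta>] N by (simp add: N_def a_def field_simps)
  finally have "sum (\<lambda>x. edge_weight \<beta> \<sigma> x * edge_weight \<beta> \<tau> x) (site_pairs N) / real N ^ 2
      = 1 - 2 * a / real q + a\<^sup>2 * ((\<Sum>t\<in>colour_pairs q. real (overlap N \<sigma> \<tau> t) ^ 2) / real N ^ 2)"
    using N by (simp add: N_def field_simps)
  then show ?thesis
    by (simp add: pair_edge_mean_def N_def a_def power_divide sum_divide_distrib)
qed

lemma bij_betw_zip_PiE:
  "bij_betw (\<lambda>(\<sigma>, \<tau>). \<lambda>i\<in>I. (\<sigma> i, \<tau> i)) ((I \<rightarrow>\<^sub>E A) \<times> (I \<rightarrow>\<^sub>E B)) (I \<rightarrow>\<^sub>E A \<times> B)"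
  by (rule bij_betw_byWitness[where f' = "\<lambda>\<rho>. (\<lambda>i\<in>I. fst (\<rho> i), \<lambda>i\<in>I. snd (\<rho> i))"])
    (auto simp: PiE_def extensional_def fun_eq_iff Pi_iff mem_Times_iff)

lemma zip_fibre_counts_iff:
  assumes n: "n \<in> balanced_matrices NN q"
    and \<sigma>: "\<sigma> \<in> sites (NN * q) \<rightarrow>\<^sub>E {1..q}" and \<tau>: "\<tau> \<in> sites (NN * q) \<rightarrow>\<^sub>E {1..q}"
  shows "(\<forall>t\<in>colour_pairs q. card {i\<in>sites (NN * q). (\<lambda>i\<in>sites (NN * q). (\<sigma> i, \<tau> i)) i = t} = n t)
    \<longleftrightarrow> \<sigma> \<in> balanced_configs NN q \<and> \<tau> \<in> balanced_configs NN q \<and> overlap (NN * q) \<sigma> \<tau> = n"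
proof -
  have range: "\<sigma> i \<in> {1..q}" "\<tau> i \<in> {1..q}" if "i \<in> sites (NN * q)" for i
    using \<sigma> \<tau> that by auto
  have "overlap (NN * q) \<sigma> \<tau> x = 0" if "x \<notin> colour_pairs q" for x
    using range that by (intro overlap_outside) auto
  then have "overlap (NN * q) \<sigma> \<tau> = n \<longleftrightarrow> (\<forall>t\<in>colour_pairs q. overlap (NN * q) \<sigma> \<tau> t = n t)"
    using balanced_matrices_outside[OF n] by (metis ext)
  moreover have "\<sigma> \<in> balanced_configs NN q \<and> \<tau> \<in> balanced_configs NN q" if overlap: "overlap (NN * q) \<sigma> \<tau> = n"
  proof -
    have "card {i\<in>sites (NN * q). \<sigma> i = r} = NN" "card {i\<in>sites (NN * q). \<tau> i = r} = NN" if "r \<in> {1..q}" for r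
      using overlap_row_sum[of "NN * q" \<tau> q \<sigma> r] overlap_col_sum[of "NN * q" \<sigma> q \<tau> r] range n that
      unfolding overlap balanced_matrices_def by auto
    then show ?thesis using \<sigma> \<tau> by (simp add: balanced_configs_def)
  qed
  moreover have "card {i\<in>sites (NN * q). (\<lambda>i\<in>sites (NN * q). (\<sigma> i, \<tau> i)) i = t} = overlap (NN * q) \<sigma> \<tau> t" for t
    unfolding overlap_def by (rule arg_cong[where f = card]) auto
  ultimately show ?thesis by auto
qed

theorem card_pairs_with_overlap:
  assumes n: "n \<in> balanced_matrices NN q"
  shows "real (card {k\<in>balanced_configs NN q \<times> balanced_configs NN q. overlap (NN * q) (fst k) (snd k) = n})
    = fact (NN * q) / (\<Prod>x\<in>colour_pairs q. fact (n x))"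
proof -
  define C where "C = sites (NN * q) \<rightarrow>\<^sub>E {1..q}"
  have "bij_betw (\<lambda>(\<sigma>, \<tau>). \<lambda>i\<in>sites (NN * q). (\<sigma> i, \<tau> i))
      {k\<in>C \<times> C. fst k \<in> balanced_configs NN q \<and> snd k \<in> balanced_configs NN q \<and> overlap (NN * q) (fst k) (snd k) = n}
      {\<rho>\<in>sites (NN * q) \<rightarrow>\<^sub>E colour_pairs q. \<forall>t\<in>colour_pairs q. card {i\<in>sites (NN * q). \<rho> i = t} = n t}"
    unfolding C_def
  proof (rule bij_betw_Collect[OF bij_betw_zip_PiE])
    fix k assume "k \<in> (sites (NN * q) \<rightarrow>\<^sub>E {1..q}) \<times> (sites (NN * q) \<rightarrow>\<^sub>E {1..q})"
    then show "(\<forall>t\<in>colour_pairs q. card {i\<in>sites (NN * q).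
          (case k of (\<sigma>, \<tau>) \<Rightarrow> \<lambda>i\<in>sites (NN * q). (\<sigma> i, \<tau> i)) i = t} = n t)
      \<longleftrightarrow> fst k \<in> balanced_configs NN q \<and> snd k \<in> balanced_configs NN q \<and> overlap (NN * q) (fst k) (snd k) = n"
      using zip_fibre_counts_iff[OF n] by (cases k) simp
  qed
  moreover have "{k\<in>C \<times> C. fst k \<in> balanced_configs NN q \<and> snd k \<in> balanced_configs NN q
        \<and> overlap (NN * q) (fst k) (snd k) = n}
      = {k\<in>balanced_configs NN q \<times> balanced_configs NN q. overlap (NN * q) (fst k) (snd k) = n}"
    by (auto simp: C_def balanced_configs_def)
  ultimately show ?thesis
    using card_functions_with_fibre_counts[of "colour_pairs q" n "NN * q", folded sites_def]
      sum_balanced_matrix[OF n]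
    by (simp add: bij_betw_same_card del: of_nat_mult)
qed

section \<open>Stirling bounds\<close>

definition nlogn :: "nat \<Rightarrow> real" where
  "nlogn n = real n * ln (real n)"

lemma mult_ln_Suc_diff_le: "real n * (ln (real n + 1) - ln (real n)) \<le> 1"
proof (cases "n = 0")
  case False
  then have "ln (real n + 1) - ln (real n) \<le> (real n + 1) / real n - 1"
    using ln_le_minus_one[of "(real n + 1) / real n"] by (simp add: ln_div)
  then show ?thesis using False by (simp add: field_simps)
qed simp

lemma nlogn_Suc_le: "nlogn (n + 1) \<le> nlogn n + 1 + ln (real n + 1)"
  using mult_ln_Suc_diff_le[of n] by (simp add: nlogn_def algebra_simps)

lemma ln_fact_ge: "nlogn n - real n \<le> ln (fact n)"
proof (induction n)
  case (Suc n)
  have "ln (fact (Suc n) :: real) = ln (real n + 1) + ln (fact n)"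
    by (simp add: ln_mult add.commute)
  moreover have "nlogn (Suc n) - real (Suc n) \<le> ln (real n + 1) + (nlogn n - real n)"
    using mult_ln_Suc_diff_le[of n] by (simp add: nlogn_def algebra_simps)
  ultimately show ?case using Suc by simp
qed (simp add: nlogn_def)

lemma ln_fact_le: "ln (fact n) \<le> nlogn (n + 1) - real n"
proof (induction n)
  case (Suc n)
  have "ln (real n + 1) - ln (real n + 2) \<le> (real n + 1) / (real n + 2) - 1"
    using ln_le_minus_one[of "(real n + 1) / (real n + 2)"] by (simp add: ln_div)
  then have "(real n + 2) * (ln (real n + 1) - ln (real n + 2)) \<le> - 1"
    by (simp add: field_simps)
  then have "ln (real n + 1) + (nlogn (n + 1) - real n) \<le> nlogn (Suc n + 1) - real (Suc n)"
    by (simp add: nlogn_def algebra_simps)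
  moreover have "ln (fact (Suc n) :: real) = ln (real n + 1) + ln (fact n)"
    by (simp add: ln_mult add.commute)
  ultimately show ?case using Suc by simp
qed (simp add: nlogn_def)

theorem ln_multinomial_bounds:
  fixes m :: "'a \<Rightarrow> nat"
  assumes T: "finite T" and N: "sum m T = N"
  shows "\<bar>ln (fact N / (\<Prod>t\<in>T. fact (m t))) - (nlogn N - (\<Sum>t\<in>T. nlogn (m t)))\<bar>
    \<le> real (card T + 1) * (1 + ln (real N + 1))"
proof -
  have "ln (fact N / (\<Prod>t\<in>T. fact (m t))) = ln (fact N) - (\<Sum>t\<in>T. ln (fact (m t) :: real))"
    using T by (simp add: ln_div prod_pos ln_prod)
  moreover have "(\<Sum>t\<in>T. nlogn (m t)) - real N \<le> (\<Sum>t\<in>T. ln (fact (m t)))"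
    using sum_mono[of T "\<lambda>t. nlogn (m t) - real (m t)", OF ln_fact_ge] N
    by (simp add: sum_subtractf flip: of_nat_sum)
  moreover have "(\<Sum>t\<in>T. ln (fact (m t))) \<le> (\<Sum>t\<in>T. nlogn (m t) + (1 + ln (real N + 1)) - real (m t))"
  proof (rule sum_mono)
    fix t assume "t \<in> T"
    then have "ln (real (m t) + 1) \<le> ln (real N + 1)"
      using member_le_sum[of t T m] T N by simp
    then show "ln (fact (m t)) \<le> nlogn (m t) + (1 + ln (real N + 1)) - real (m t)"
      using ln_fact_le[of "m t"] nlogn_Suc_le[of "m t"] by linarith
  qed
  moreover have "(\<Sum>t\<in>T. nlogn (m t) + (1 + ln (real N + 1)) - real (m t))
      = (\<Sum>t\<in>T. nlogn (m t)) + real (card T) * (1 + ln (real N + 1)) - real N"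
    using N by (simp add: sum.distrib sum_subtractf flip: of_nat_sum)
  moreover have "nlogn N - real N \<le> ln (fact N)" "ln (fact N) \<le> nlogn N + 1 + ln (real N + 1) - real N"
    using ln_fact_ge[of N] ln_fact_le[of N] nlogn_Suc_le[of N] by linarith+
  moreover have "0 \<le> 1 + ln (real N + 1)" by simp
  ultimately show ?thesis by (simp add: abs_le_iff algebra_simps)
qed

lemma entropy2_of_counts:
  assumes "sum m (colour_pairs q) = N" "N > 0"
  shows "real N * entropy2 q (\<lambda>x. real (m x) / real N) = nlogn N - (\<Sum>x\<in>colour_pairs q. nlogn (m x))"
proof -
  have "real N * (if real (m x) / real N = 0 then 0 else real (m x) / real N * ln (real (m x) / real N))
      = nlogn (m x) - real (m x) * ln (real N)" for x
    using assms(2) by (cases "m x = 0") (simp_all add: nlogn_def ln_div algebra_simps)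
  then have "real N * entropy2 q (\<lambda>x. real (m x) / real N)
      = - (\<Sum>x\<in>colour_pairs q. nlogn (m x) - real (m x) * ln (real N))"
    unfolding entropy2_def by (simp only: mult_minus_right sum_distrib_left)
  also have "\<dots> = nlogn N - (\<Sum>x\<in>colour_pairs q. nlogn (m x))"
    using assms(1) by (simp add: sum_subtractf nlogn_def flip: sum_distrib_right of_nat_sum)
  finally show ?thesis .
qed

lemma ln_card_balanced_configs_bounds:
  assumes "NN > 0" "q > 0"
  shows "\<bar>ln (real (card (balanced_configs NN q))) - real (NN * q) * ln (real q)\<bar>
    \<le> real (q + 1) * (1 + ln (real (NN * q) + 1))"
proof -
  have "nlogn (NN * q) - (\<Sum>t\<in>{1..q}. nlogn NN) = real (NN * q) * ln (real q)"
    using assms by (simp add: nlogn_def ln_mult algebra_simps)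
  then show ?thesis
    using ln_multinomial_bounds[of "{1..q}" "\<lambda>_. NN" "NN * q"] by (simp add: card_balanced_configs)
qed

lemma ln_card_pairs_with_overlap_bounds:
  assumes n: "n \<in> balanced_matrices NN q" and "NN * q > 0"
  shows "\<bar>ln (real (card {k\<in>balanced_configs NN q \<times> balanced_configs NN q. overlap (NN * q) (fst k) (snd k) = n}))
      - real (NN * q) * entropy2 q (\<lambda>x. real (n x) / real (NN * q))\<bar>
    \<le> real (q * q + 1) * (1 + ln (real (NN * q) + 1))"
  using ln_multinomial_bounds[of "colour_pairs q" n "NN * q"] sum_balanced_matrix[OF n]
    entropy2_of_counts[OF sum_balanced_matrix[OF n] assms(2)]
  by (simp add: card_pairs_with_overlap[OF n])

section \<open>The functional \<open>phi2\<close> on \<open>Mstar q\<close>\<close>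

lemma entropy2_eq: "entropy2 q \<mu> = - (\<Sum>x\<in>colour_pairs q. \<mu> x * ln (\<mu> x))"
  unfolding entropy2_def by (intro arg_cong[where f = uminus] sum.cong) auto

lemma continuous_on_mult_ln: "continuous_on {0..} (\<lambda>x::real. x * ln x)"
proof -
  have "continuous (at x within {0..}) (\<lambda>x::real. x * ln x)" if "x \<ge> 0" for x
  proof (cases "x = 0")
    case True
    have "at (0::real) within {0..} = at_right 0"
      unfolding at_within_def by (rule arg_cong[where f = "\<lambda>S. inf (nhds 0) (principal S)"]) auto
    moreover have "((\<lambda>x::real. x * ln x) \<longlongrightarrow> 0) (at_right 0)" by real_asymp
    ultimately show ?thesis using True by (simp add: continuous_within)
  next
    case False
    with that have "continuous (at x) (\<lambda>x::real. x * ln x)" by (intro continuous_intros) auto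
    then show ?thesis by (rule continuous_at_imp_continuous_at_within)
  qed
  then show ?thesis by (simp add: continuous_on_eq_continuous_within)
qed

lemma Mstar_nonneg: "\<mu> \<in> Mstar q \<Longrightarrow> 0 \<le> \<mu> x"
  unfolding Mstar_def by blast

lemma Mstar_outside: "\<mu> \<in> Mstar q \<Longrightarrow> x \<notin> colour_pairs q \<Longrightarrow> \<mu> x = 0"
  unfolding Mstar_def by blast

lemma sum_Mstar:
  assumes "\<mu> \<in> Mstar q" "q > 0"
  shows "(\<Sum>x\<in>colour_pairs q. \<mu> x) = 1"
proof -
  have "(\<Sum>x\<in>colour_pairs q. \<mu> x) = (\<Sum>r\<in>{1..q}. \<Sum>s\<in>{1..q}. \<mu> (r, s))"
    by (simp add: sum.cartesian_product)
  also have "\<dots> = (\<Sum>r\<in>{1..q}. 1 / real q)"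
    using assms(1) by (intro sum.cong) (auto simp: Mstar_def)
  finally show ?thesis using assms(2) by simp
qed

lemma Mstar_le_1:
  assumes "\<mu> \<in> Mstar q" "q > 0"
  shows "\<mu> x \<le> 1"
proof (cases "x \<in> colour_pairs q")
  case True
  then have "\<mu> x \<le> (\<Sum>x\<in>colour_pairs q. \<mu> x)"
    using Mstar_nonneg[OF assms(1)] by (intro member_le_sum) auto
  then show ?thesis using sum_Mstar[OF assms] by simp
qed (simp add: Mstar_outside[OF assms(1)])

lemma pair_edge_mean_bounds:
  assumes "\<mu> \<in> Mstar q" "q \<ge> 2" "\<beta> \<ge> 0"
  shows "exp (- \<beta>) \<le> pair_edge_mean \<beta> q \<mu>" "pair_edge_mean \<beta> q \<mu> \<le> 2"
proof -
  define a where "a = 1 - exp (- \<beta>)"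
  have a: "0 \<le> a" "a < 1" using assms(3) by (auto simp: a_def)
  have "(\<Sum>x\<in>colour_pairs q. (\<mu> x)\<^sup>2) \<le> (\<Sum>x\<in>colour_pairs q. \<mu> x)"
    using Mstar_nonneg[OF assms(1)] Mstar_le_1[OF assms(1)] assms(2)
    by (intro sum_mono) (simp add: power2_eq_square mult_left_le)
  then have sq: "0 \<le> (\<Sum>x\<in>colour_pairs q. (\<mu> x)\<^sup>2)" "(\<Sum>x\<in>colour_pairs q. (\<mu> x)\<^sup>2) \<le> 1"
    using sum_Mstar[OF assms(1)] assms(2) by (auto intro: sum_nonneg)
  have G: "pair_edge_mean \<beta> q \<mu> = 1 - 2 * a / real q + a\<^sup>2 * (\<Sum>x\<in>colour_pairs q. (\<mu> x)\<^sup>2)"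
    by (simp add: pair_edge_mean_def a_def)
  have "2 * a / real q \<le> a" using a assms(2) by (simp add: field_simps mult_left_mono)
  moreover have "0 \<le> a\<^sup>2 * (\<Sum>x\<in>colour_pairs q. (\<mu> x)\<^sup>2)" using sq(1) by simp
  ultimately show "exp (- \<beta>) \<le> pair_edge_mean \<beta> q \<mu>"
    unfolding G by (simp add: a_def)
  have "a\<^sup>2 * (\<Sum>x\<in>colour_pairs q. (\<mu> x)\<^sup>2) \<le> 1 * 1"
    using sq a by (intro mult_mono) (auto simp: power_le_one)
  moreover have "0 \<le> 2 * a / real q" using a by simp
  ultimately show "pair_edge_mean \<beta> q \<mu> \<le> 2"
    unfolding G by linarith
qed

lemma pair_edge_mean_pos:
  assumes "\<mu> \<in> Mstar q" "q \<ge> 2" "\<beta> \<ge> 0"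
  shows "pair_edge_mean \<beta> q \<mu> > 0"
  using pair_edge_mean_bounds(1)[OF assms] exp_gt_zero by (rule order.strict_trans2[rotated])

lemma abs_ln_pair_edge_mean_le:
  assumes "\<mu> \<in> Mstar q" "q \<ge> 2" "\<beta> \<ge> 0"
  shows "\<bar>ln (pair_edge_mean \<beta> q \<mu>)\<bar> \<le> \<beta> + 1"
proof -
  have "ln (exp (- \<beta>)) \<le> ln (pair_edge_mean \<beta> q \<mu>)"
    using pair_edge_mean_bounds(1)[OF assms] pair_edge_mean_pos[OF assms] by (subst ln_le_cancel_iff) auto
  then have "- \<beta> \<le> ln (pair_edge_mean \<beta> q \<mu>)" by simp
  moreover have "ln (pair_edge_mean \<beta> q \<mu>) \<le> ln 2"
    using pair_edge_mean_bounds(2)[OF assms] pair_edge_mean_pos[OF assms] by simp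
  moreover have "ln (2::real) \<le> 1" using ln_le_minus_one[of 2] by simp
  ultimately show ?thesis using assms(3) by linarith
qed

lemma phi2_kappa_lipschitz:
  assumes "\<mu> \<in> Mstar q" "q \<ge> 2" "\<beta> \<ge> 0"
  shows "\<bar>phi2 \<beta> \<kappa>' q \<mu> - phi2 \<beta> \<kappa> q \<mu>\<bar> \<le> (\<beta> + 1) / 2 * \<bar>\<kappa>' - \<kappa>\<bar>"
proof -
  have "phi2 \<beta> \<kappa>' q \<mu> - phi2 \<beta> \<kappa> q \<mu> = (\<kappa>' - \<kappa>) / 2 * ln (pair_edge_mean \<beta> q \<mu>)"
    by (simp add: phi2_eq_pair_edge_mean algebra_simps)
  then have "\<bar>phi2 \<beta> \<kappa>' q \<mu> - phi2 \<beta> \<kappa> q \<mu>\<bar> = \<bar>\<kappa>' - \<kappa>\<bar> / 2 * \<bar>ln (pair_edge_mean \<beta> q \<mu>)\<bar>"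
    by (simp only: abs_mult abs_divide abs_numeral)
  also have "\<dots> \<le> \<bar>\<kappa>' - \<kappa>\<bar> / 2 * (\<beta> + 1)"
    using abs_ln_pair_edge_mean_le[OF assms] by (intro mult_left_mono) auto
  finally show ?thesis by (simp add: mult_ac)
qed

definition uniform_coupling :: "nat \<Rightarrow> nat \<times> nat \<Rightarrow> real" where
  "uniform_coupling q x = (if x \<in> colour_pairs q then 1 / real q ^ 2 else 0)"

lemma uniform_coupling_Mstar: "q > 0 \<Longrightarrow> uniform_coupling q \<in> Mstar q"
  by (auto simp: Mstar_def uniform_coupling_def power2_eq_square)

lemma Mstar_convex_combination:
  assumes "\<mu> \<in> Mstar q" "\<nu> \<in> Mstar q" "0 \<le> t" "t \<le> 1"
  shows "(\<lambda>x. (1 - t) * \<mu> x + t * \<nu> x) \<in> Mstar q"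
  using assms by (auto simp: Mstar_def sum.distrib simp flip: sum_distrib_left distrib_right add_divide_distrib)

lemma continuous_on_coordinate: "continuous_on S (\<lambda>\<mu>::nat \<times> nat \<Rightarrow> real. \<mu> x)"
  by (rule continuous_on_subset[OF continuous_on_product_coordinates]) simp

lemma closed_Mstar: "closed (Mstar q)"
proof -
  have "Mstar q = (\<Inter>x. {\<mu>. 0 \<le> \<mu> x}) \<inter> (\<Inter>x\<in>- colour_pairs q. {\<mu>. \<mu> x = 0})
     \<inter> (\<Inter>r\<in>{1..q}. {\<mu>. (\<Sum>r2\<in>{1..q}. \<mu> (r, r2)) = 1 / real q})
     \<inter> (\<Inter>r\<in>{1..q}. {\<mu>. (\<Sum>r1\<in>{1..q}. \<mu> (r1, r)) = 1 / real q})"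
    unfolding Mstar_def
    by (intro set_eqI) (simp only: mem_Collect_eq Int_iff INT_iff Compl_iff UNIV_I simp_thms, blast)
  then show ?thesis
    by (simp only:) (intro closed_Int closed_INT ballI allI closed_Collect_le closed_Collect_eq
        continuous_intros continuous_on_coordinate)
qed

lemma compact_Mstar:
  assumes "q > 0"
  shows "compact (Mstar q)"
proof -
  define S where "S = (\<lambda>x::nat \<times> nat. if x \<in> colour_pairs q then {0..1::real} else {0})"
  have "compactin (product_topology (\<lambda>_. euclidean) UNIV) (PiE UNIV S)"
    by (subst compactin_PiE) (auto simp: S_def)
  then have "compact (PiE UNIV S)" by (simp add: euclidean_product_topology)
  moreover have "Mstar q \<subseteq> PiE UNIV S"
    using Mstar_le_1[OF _ assms] by (auto simp: S_def Mstar_def)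
  ultimately show ?thesis
    using compact_Int_closed[OF _ closed_Mstar] by (metis inf.absorb2)
qed

lemma continuous_on_phi2:
  assumes "q \<ge> 2" "\<beta> \<ge> 0"
  shows "continuous_on (Mstar q) (phi2 \<beta> \<kappa> q)"
proof -
  have "continuous_on (Mstar q) (\<lambda>\<mu>. \<mu> x * ln (\<mu> x))" for x
    by (rule continuous_on_compose2[OF continuous_on_mult_ln continuous_on_coordinate]) (auto simp: Mstar_nonneg)
  then have "continuous_on (Mstar q) (entropy2 q)"
    unfolding entropy2_eq by (intro continuous_on_minus continuous_on_sum)
  moreover have "continuous_on (Mstar q) (\<lambda>\<mu>. ln (pair_edge_mean \<beta> q \<mu>))"
    using pair_edge_mean_pos[OF _ assms]
    unfolding pair_edge_mean_def by (intro continuous_intros continuous_on_coordinate) force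
  ultimately show ?thesis
    unfolding phi2_eq_pair_edge_mean by (intro continuous_on_add continuous_on_mult_left)
qed

lemma phi2_attains_max:
  assumes "q \<ge> 2" "\<beta> \<ge> 0"
  shows "\<exists>\<mu>\<in>Mstar q. \<forall>\<nu>\<in>Mstar q. phi2 \<beta> \<kappa> q \<nu> \<le> phi2 \<beta> \<kappa> q \<mu>"
  using assms uniform_coupling_Mstar[of q]
  by (intro continuous_attains_sup compact_Mstar continuous_on_phi2) auto

lemma tendsto_phi2:
  assumes lim: "\<And>x. x \<in> colour_pairs q \<Longrightarrow> (\<lambda>n. p n x) \<longlonglongrightarrow> \<nu> x"
    and nonneg: "\<And>n x. 0 \<le> p n x" "\<And>x. 0 \<le> \<nu> x" and pos: "pair_edge_mean \<beta> q \<nu> > 0"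
  shows "(\<lambda>n. phi2 \<beta> \<kappa> q (p n)) \<longlonglongrightarrow> phi2 \<beta> \<kappa> q \<nu>"
proof -
  have "(\<lambda>n. entropy2 q (p n)) \<longlonglongrightarrow> entropy2 q \<nu>"
    unfolding entropy2_eq
    using continuous_on_tendsto_compose[OF continuous_on_mult_ln lim] nonneg
    by (intro tendsto_minus tendsto_sum) simp
  moreover have "(\<lambda>n. pair_edge_mean \<beta> q (p n)) \<longlonglongrightarrow> pair_edge_mean \<beta> q \<nu>"
    unfolding pair_edge_mean_def by (intro tendsto_intros lim) auto
  ultimately show ?thesis
    unfolding phi2_eq_pair_edge_mean using pos by (intro tendsto_intros) auto
qed

lemma phi2_approx_by_positive:
  assumes "\<mu> \<in> Mstar q" "q \<ge> 2" "\<beta> \<ge> 0" "a < phi2 \<beta> \<kappa> q \<mu>"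
  shows "\<exists>\<nu>\<in>Mstar q. \<exists>\<delta>>0. (\<forall>x\<in>colour_pairs q. \<delta> \<le> \<nu> x) \<and> a < phi2 \<beta> \<kappa> q \<nu>"
proof -
  define \<nu> where "\<nu> = (\<lambda>k x. (1 - 1 / real (Suc k)) * \<mu> x + 1 / real (Suc k) * uniform_coupling q x)"
  have \<nu>: "\<nu> k \<in> Mstar q" for k
    unfolding \<nu>_def using assms uniform_coupling_Mstar[of q]
    by (intro Mstar_convex_combination) auto
  have "(\<lambda>k. \<nu> k x) \<longlonglongrightarrow> (1 - 0) * \<mu> x + 0 * uniform_coupling q x" for x
    unfolding \<nu>_def by (intro tendsto_intros LIMSEQ_Suc[OF lim_1_over_n])
  then have "(\<lambda>k. phi2 \<beta> \<kappa> q (\<nu> k)) \<longlonglongrightarrow> phi2 \<beta> \<kappa> q \<mu>"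
    using \<nu> assms by (intro tendsto_phi2) (auto intro: Mstar_nonneg pair_edge_mean_pos)
  then obtain k where k: "a < phi2 \<beta> \<kappa> q (\<nu> k)"
    using assms(4) by (metis eventually_sequentially order_tendstoD(1) order_refl)
  have "0 \<le> (1 - 1 / real (Suc k)) * \<mu> x" for x
    using Mstar_nonneg[OF assms(1), of x] by simp
  then have "1 / real (Suc k) * (1 / real q ^ 2) \<le> \<nu> k x" if "x \<in> colour_pairs q" for x
    using that unfolding \<nu>_def uniform_coupling_def by simp
  moreover have "1 / real (Suc k) * (1 / real q ^ 2) > 0" using assms(2) by simp
  ultimately show ?thesis using \<nu> k by blast
qed

section \<open>Integer matrices with prescribed margins\<close>

text \<open>A \<open>q \<times> q\<close> matrix with all row and column sums equal to \<open>R\<close> is determined by its upper left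
  \<open>(q - 1) \<times> (q - 1)\<close> block.\<close>
definition border_completion :: "nat \<Rightarrow> 'a \<Rightarrow> (nat \<Rightarrow> nat \<Rightarrow> 'a) \<Rightarrow> nat \<Rightarrow> nat \<Rightarrow> 'a :: comm_ring_1" where
  "border_completion q R g r s =
    (if r < q \<and> s < q then g r s
     else if r < q then R - (\<Sum>s'\<in>{1..<q}. g r s')
     else if s < q then R - (\<Sum>r'\<in>{1..<q}. g r' s)
     else R - of_nat (q - 1) * R + (\<Sum>r'\<in>{1..<q}. \<Sum>s'\<in>{1..<q}. g r' s'))"

lemma sum_atLeastAtMost_split_last:
  assumes "(q :: nat) > 0"
  shows "(\<Sum>s\<in>{1..q}. f s) = (\<Sum>s\<in>{1..<q}. f s) + f q"
proof -
  have "{1..q} = insert q {1..<q}" using assms by auto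
  then show ?thesis by (simp add: add.commute)
qed

lemma border_completion_row_sum:
  assumes "q > 0" "r \<in> {1..q}"
  shows "(\<Sum>s\<in>{1..q}. border_completion q R g r s) = R"
proof (cases "r < q")
  case True
  then have "(\<Sum>s\<in>{1..<q}. border_completion q R g r s) = (\<Sum>s\<in>{1..<q}. g r s)"
    by (intro sum.cong) (auto simp: border_completion_def)
  then show ?thesis
    unfolding sum_atLeastAtMost_split_last[OF assms(1)] using True by (simp add: border_completion_def)
next
  case False
  then have "(\<Sum>s\<in>{1..<q}. border_completion q R g r s) = (\<Sum>s\<in>{1..<q}. R - (\<Sum>r'\<in>{1..<q}. g r' s))"
    by (intro sum.cong) (auto simp: border_completion_def)
  then show ?thesis
    unfolding sum_atLeastAtMost_split_last[OF assms(1)] using assms False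
    by (simp add: border_completion_def sum_subtractf sum.swap[of "\<lambda>s r. g r s"])
qed

lemma border_completion_col_sum:
  assumes "q > 0" "s \<in> {1..q}"
  shows "(\<Sum>r\<in>{1..q}. border_completion q R g r s) = R"
proof (cases "s < q")
  case True
  then have "(\<Sum>r\<in>{1..<q}. border_completion q R g r s) = (\<Sum>r\<in>{1..<q}. g r s)"
    by (intro sum.cong) (auto simp: border_completion_def)
  then show ?thesis
    unfolding sum_atLeastAtMost_split_last[OF assms(1)] using True by (simp add: border_completion_def)
next
  case False
  then have "(\<Sum>r\<in>{1..<q}. border_completion q R g r s) = (\<Sum>r\<in>{1..<q}. R - (\<Sum>s'\<in>{1..<q}. g r s'))"
    by (intro sum.cong) (auto simp: border_completion_def)
  then show ?thesis
    unfolding sum_atLeastAtMost_split_last[OF assms(1)] using assms False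
    by (simp add: border_completion_def sum_subtractf)
qed

lemma border_completion_unique:
  assumes "q > 0" and r: "r \<in> {1..q}" and s: "s \<in> {1..q}"
    and rows: "\<And>r. r \<in> {1..q} \<Longrightarrow> (\<Sum>s\<in>{1..q}. F r s) = R"
    and cols: "\<And>s. s \<in> {1..q} \<Longrightarrow> (\<Sum>r\<in>{1..q}. F r s) = R"
  shows "border_completion q R F r s = F r s"
proof -
  have row: "F r' q = R - (\<Sum>s'\<in>{1..<q}. F r' s')" if "r' \<in> {1..q}" for r'
    using rows[OF that] unfolding sum_atLeastAtMost_split_last[OF assms(1)] by (simp add: algebra_simps)
  have col: "F q s' = R - (\<Sum>r'\<in>{1..<q}. F r' s')" if "s' \<in> {1..q}" for s'
    using cols[OF that] unfolding sum_atLeastAtMost_split_last[OF assms(1)] by (simp add: algebra_simps)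
  have "F q q = R - (\<Sum>s'\<in>{1..<q}. F q s')" using row assms(1) by simp
  also have "\<dots> = R - (\<Sum>s'\<in>{1..<q}. R - (\<Sum>r'\<in>{1..<q}. F r' s'))"
    using col by (intro arg_cong[where f = "(-) R"] sum.cong) auto
  finally have "F q q = R - of_nat (q - 1) * R + (\<Sum>r'\<in>{1..<q}. \<Sum>s'\<in>{1..<q}. F r' s')"
    by (simp add: sum_subtractf sum.swap[of "\<lambda>s r. F r s"])
  then show ?thesis
    using r s row col by (auto simp: border_completion_def)
qed

lemma border_completion_diff:
  "border_completion q R g r s - border_completion q R' g' r s
    = border_completion q (R - R') (\<lambda>r s. g r s - g' r s) r s"
  by (simp add: border_completion_def sum_subtractf algebra_simps)

lemma of_int_border_completion:
  "of_int (border_completion q R g r s) = border_completion q (of_int R) (\<lambda>r s. of_int (g r s)) r s"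
  by (simp add: border_completion_def)

lemma abs_border_completion_le:
  fixes g :: "nat \<Rightarrow> nat \<Rightarrow> real"
  assumes "\<And>r s. \<bar>g r s\<bar> \<le> 1"
  shows "\<bar>border_completion q 0 g r s\<bar> \<le> real q ^ 2"
proof -
  have sum_le: "\<bar>\<Sum>i\<in>{1..<q}. h i\<bar> \<le> real q" if "\<And>i. \<bar>h i\<bar> \<le> 1" for h :: "nat \<Rightarrow> real"
  proof -
    have "\<bar>\<Sum>i\<in>{1..<q}. h i\<bar> \<le> (\<Sum>i\<in>{1..<q}. \<bar>h i\<bar>)" by (rule sum_abs)
    also have "\<dots> \<le> (\<Sum>i\<in>{1..<q}. 1)" using that by (intro sum_mono)
    finally show ?thesis by simp
  qed
  have row: "\<bar>\<Sum>s'\<in>{1..<q}. g r' s'\<bar> \<le> real q" and col: "\<bar>\<Sum>r'\<in>{1..<q}. g r' s'\<bar> \<le> real q" for r' s'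
    using assms by (blast intro: sum_le)+
  have "\<bar>\<Sum>r'\<in>{1..<q}. \<Sum>s'\<in>{1..<q}. g r' s'\<bar> \<le> (\<Sum>r'\<in>{1..<q}. \<bar>\<Sum>s'\<in>{1..<q}. g r' s'\<bar>)"
    by (rule sum_abs)
  also have "\<dots> \<le> (\<Sum>r'\<in>{1..<q}. real q)" by (intro sum_mono row)
  also have "\<dots> \<le> real q ^ 2" by (simp add: power2_eq_square mult_right_mono)
  finally have corner: "\<bar>\<Sum>r'\<in>{1..<q}. \<Sum>s'\<in>{1..<q}. g r' s'\<bar> \<le> real q ^ 2" .
  show ?thesis
  proof (cases "q = 0")
    case False
    then have "real q \<le> real q ^ 2" "1 \<le> real q ^ 2"
      using one_le_power[of "real q" 2] power_increasing[of 1 2 "real q"] by simp_all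
    then have "\<bar>g r s\<bar> \<le> real q ^ 2" "\<bar>\<Sum>s'\<in>{1..<q}. g r s'\<bar> \<le> real q ^ 2"
      "\<bar>\<Sum>r'\<in>{1..<q}. g r' s\<bar> \<le> real q ^ 2"
      using assms[of r s] row[of r] col[of s] by linarith+
    then show ?thesis
      using corner by (simp add: border_completion_def)
  qed (simp add: border_completion_def)
qed

theorem integer_matrix_rounding:
  fixes F :: "nat \<Rightarrow> nat \<Rightarrow> real" and R :: int
  assumes "q > 0"
    and rows: "\<And>r. r \<in> {1..q} \<Longrightarrow> (\<Sum>s\<in>{1..q}. F r s) = of_int R"
    and cols: "\<And>s. s \<in> {1..q} \<Longrightarrow> (\<Sum>r\<in>{1..q}. F r s) = of_int R"
  shows "(\<forall>r\<in>{1..q}. (\<Sum>s\<in>{1..q}. border_completion q R (\<lambda>r s. \<lfloor>F r s\<rfloor>) r s) = R)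
    \<and> (\<forall>s\<in>{1..q}. (\<Sum>r\<in>{1..q}. border_completion q R (\<lambda>r s. \<lfloor>F r s\<rfloor>) r s) = R)
    \<and> (\<forall>r\<in>{1..q}. \<forall>s\<in>{1..q}. \<bar>of_int (border_completion q R (\<lambda>r s. \<lfloor>F r s\<rfloor>) r s) - F r s\<bar> \<le> real q ^ 2)"
proof (intro conjI ballI)
  fix r assume "r \<in> {1..q}"
  then show "(\<Sum>s\<in>{1..q}. border_completion q R (\<lambda>r s. \<lfloor>F r s\<rfloor>) r s) = R"
    by (rule border_completion_row_sum[OF assms(1)])
next
  fix s assume "s \<in> {1..q}"
  then show "(\<Sum>r\<in>{1..q}. border_completion q R (\<lambda>r s. \<lfloor>F r s\<rfloor>) r s) = R"
    by (rule border_completion_col_sum[OF assms(1)])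
next
  fix r s assume "r \<in> {1..q}" "s \<in> {1..q}"
  then have "F r s = border_completion q (of_int R) F r s"
    using border_completion_unique[of q r s F, OF assms(1) _ _ rows cols] by simp
  then have "of_int (border_completion q R (\<lambda>r s. \<lfloor>F r s\<rfloor>) r s) - F r s
      = border_completion q (of_int R) (\<lambda>r s. of_int \<lfloor>F r s\<rfloor>) r s - border_completion q (of_int R) F r s"
    by (simp add: of_int_border_completion)
  also have "\<dots> = border_completion q 0 (\<lambda>r s. of_int \<lfloor>F r s\<rfloor> - F r s) r s"
    by (simp add: border_completion_diff)
  also have "\<bar>\<dots>\<bar> \<le> real q ^ 2"
    by (rule abs_border_completion_le) linarith
  finally show "\<bar>of_int (border_completion q R (\<lambda>r s. \<lfloor>F r s\<rfloor>) r s) - F r s\<bar> \<le> real q ^ 2" .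
qed

lemma balanced_matrix_near:
  assumes \<nu>: "\<nu> \<in> Mstar q" and q: "q > 0" and \<delta>: "\<And>x. x \<in> colour_pairs q \<Longrightarrow> \<delta> \<le> \<nu> x"
    and large: "real q ^ 2 \<le> real (NN * q) * \<delta>"
  shows "\<exists>n\<in>balanced_matrices NN q. \<forall>x\<in>colour_pairs q. \<bar>real (n x) - real (NN * q) * \<nu> x\<bar> \<le> real q ^ 2"
proof -
  define F where "F = (\<lambda>r s. real (NN * q) * \<nu> (r, s))"
  define m where "m = border_completion q (int NN) (\<lambda>r s. \<lfloor>F r s\<rfloor>)"
  have "(\<Sum>s\<in>{1..q}. F r s) = of_int (int NN)" if "r \<in> {1..q}" for r
    using \<nu> that q by (simp add: F_def Mstar_def flip: sum_distrib_left)
  moreover have "(\<Sum>r\<in>{1..q}. F r s) = of_int (int NN)" if "s \<in> {1..q}" for s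
    using \<nu> that q by (simp add: F_def Mstar_def flip: sum_distrib_left)
  ultimately have rows: "\<forall>r\<in>{1..q}. (\<Sum>s\<in>{1..q}. m r s) = int NN"
    and cols: "\<forall>s\<in>{1..q}. (\<Sum>r\<in>{1..q}. m r s) = int NN"
    and near: "\<forall>r\<in>{1..q}. \<forall>s\<in>{1..q}. \<bar>of_int (m r s) - F r s\<bar> \<le> real q ^ 2"
    using integer_matrix_rounding[OF q] unfolding m_def by blast+
  have m_nonneg: "0 \<le> m r s" if "r \<in> {1..q}" "s \<in> {1..q}" for r s
  proof -
    have "real (NN * q) * \<delta> \<le> F r s"
      using \<delta>[of "(r, s)"] that by (simp add: F_def mult_left_mono del: of_nat_mult)
    then have "real q ^ 2 \<le> F r s" using large by linarith
    moreover have "\<bar>of_int (m r s) - F r s\<bar> \<le> real q ^ 2" using near that by blast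
    ultimately show ?thesis by linarith
  qed
  define n where "n = (\<lambda>x. if x \<in> colour_pairs q then nat (m (fst x) (snd x)) else 0)"
  have n_m: "int (n (r, s)) = m r s" if "r \<in> {1..q}" "s \<in> {1..q}" for r s
    using m_nonneg[OF that] that by (simp add: n_def)
  have "n \<in> balanced_matrices NN q"
    unfolding balanced_matrices_def
  proof (intro CollectI conjI allI impI ballI)
    fix r assume r: "r \<in> {1..q}"
    have "int (\<Sum>s\<in>{1..q}. n (r, s)) = int NN"
      using rows r n_m[OF r] by simp
    then show "(\<Sum>s\<in>{1..q}. n (r, s)) = NN" by (simp only: of_nat_eq_iff)
  next
    fix s assume s: "s \<in> {1..q}"
    have "int (\<Sum>r\<in>{1..q}. n (r, s)) = int NN"
      using cols s n_m[OF _ s] by simp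
    then show "(\<Sum>r\<in>{1..q}. n (r, s)) = NN" by (simp only: of_nat_eq_iff)
  qed (simp add: n_def)
  moreover have "\<bar>real (n x) - real (NN * q) * \<nu> x\<bar> \<le> real q ^ 2" if x: "x \<in> colour_pairs q" for x
  proof -
    obtain r s where "x = (r, s)" "r \<in> {1..q}" "s \<in> {1..q}" using x by (cases x) auto
    moreover from this have "real (n (r, s)) = of_int (m r s)" by (metis n_m of_int_of_nat_eq)
    ultimately show ?thesis using near by (simp add: F_def)
  qed
  ultimately show ?thesis by blast
qed

section \<open>Bounds on the moments\<close>

lemma balanced_matrix_frequencies_Mstar:
  assumes n: "n \<in> balanced_matrices NN q" and "NN > 0" "q > 0"
  shows "(\<lambda>x. real (n x) / real (NN * q)) \<in> Mstar q"
proof -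
  have "(\<Sum>s\<in>{1..q}. real (n (r, s)) / real (NN * q)) = 1 / real q" if "r \<in> {1..q}" for r
    using n that assms(2,3) by (simp add: balanced_matrices_def flip: sum_divide_distrib of_nat_sum)
  moreover have "(\<Sum>r\<in>{1..q}. real (n (r, s)) / real (NN * q)) = 1 / real q" if "s \<in> {1..q}" for s
    using n that assms(2,3) by (simp add: balanced_matrices_def flip: sum_divide_distrib of_nat_sum)
  ultimately show ?thesis
    using balanced_matrices_outside[OF n] unfolding Mstar_def by auto
qed

lemma finite_card_balanced_matrices:
  "finite (balanced_matrices NN q)"
  "real (card (balanced_matrices NN q)) \<le> (real (NN * q) + 1) ^ (q * q)"
proof -
  define ext where "ext = (\<lambda>f x. if x \<in> colour_pairs q then f x else (0 :: nat))"
  have sub: "balanced_matrices NN q \<subseteq> ext ` (colour_pairs q \<rightarrow>\<^sub>E {0..NN * q})"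
  proof
    fix n assume n: "n \<in> balanced_matrices NN q"
    have "n x \<le> NN * q" if "x \<in> colour_pairs q" for x
      using member_le_sum[OF that, of n] sum_balanced_matrix[OF n] by simp
    moreover have "n = ext (restrict n (colour_pairs q))"
      using balanced_matrices_outside[OF n] unfolding ext_def by auto
    ultimately show "n \<in> ext ` (colour_pairs q \<rightarrow>\<^sub>E {0..NN * q})" by auto
  qed
  then show "finite (balanced_matrices NN q)"
    by (rule finite_subset) (auto intro: finite_PiE)
  have "card (balanced_matrices NN q) \<le> card (ext ` (colour_pairs q \<rightarrow>\<^sub>E {0..NN * q}))"
    using sub by (intro card_mono) (auto intro: finite_PiE)
  also have "\<dots> \<le> card (colour_pairs q \<rightarrow>\<^sub>E {0..NN * q})" by (rule card_image_le) (auto intro: finite_PiE)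
  also have "\<dots> = (NN * q + 1) ^ (q * q)" by (simp add: card_PiE)
  finally show "real (card (balanced_matrices NN q)) \<le> (real (NN * q) + 1) ^ (q * q)"
    by (metis of_nat_1 of_nat_add of_nat_le_iff of_nat_power)
qed

lemma cond_exp_Ztilde_eq:
  assumes "c > 0" "NN * q > 0"
  shows "cond_exp_J (NN * q) c K (Ztilde NN q \<beta>)
    = real (card (balanced_configs NN q)) * (1 - (1 - exp (- \<beta>)) / real q) ^ K"
  using assms by (simp add: cond_exp_Ztilde mean_edge_weight_balanced del: of_nat_mult)

definition overlap_class_weight :: "nat \<Rightarrow> nat \<Rightarrow> real \<Rightarrow> nat \<Rightarrow> (nat \<times> nat \<Rightarrow> nat) \<Rightarrow> real" where
  "overlap_class_weight NN q \<beta> K n =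
     real (card {k\<in>balanced_configs NN q \<times> balanced_configs NN q. overlap (NN * q) (fst k) (snd k) = n})
     * pair_edge_mean \<beta> q (\<lambda>x. real (n x) / real (NN * q)) ^ K"

lemma cond_exp_Ztilde_sq_eq:
  assumes "c > 0" "NN * q > 0"
  shows "cond_exp_J (NN * q) c K (\<lambda>J. (Ztilde NN q \<beta> J)\<^sup>2)
    = (\<Sum>n\<in>balanced_matrices NN q. overlap_class_weight NN q \<beta> K n)"
proof -
  define P where "P = balanced_configs NN q \<times> balanced_configs NN q"
  define f where "f = (\<lambda>n. pair_edge_mean \<beta> q (\<lambda>x. real (n x) / real (NN * q)) ^ K)"
  have "cond_exp_J (NN * q) c K (\<lambda>J. (Ztilde NN q \<beta> J)\<^sup>2) = (\<Sum>k\<in>P. f (overlap (NN * q) (fst k) (snd k)))"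
    unfolding cond_exp_Ztilde_sq[OF assms] P_def f_def
    by (intro sum.cong) (auto simp: mean_edge_weight_product[OF _ _ assms(2)] simp del: of_nat_mult)
  also have "\<dots> = (\<Sum>n\<in>balanced_matrices NN q. \<Sum>k\<in>{k\<in>P. overlap (NN * q) (fst k) (snd k) = n}.
      f (overlap (NN * q) (fst k) (snd k)))"
    using finite_balanced_configs overlap_balanced_matrices finite_card_balanced_matrices(1)
    by (intro sum.group[symmetric]) (auto simp: P_def)
  also have "\<dots> = (\<Sum>n\<in>balanced_matrices NN q. overlap_class_weight NN q \<beta> K n)"
    by (intro sum.cong refl) (simp add: overlap_class_weight_def P_def f_def)
  finally show ?thesis .
qed

lemma overlap_class_weight_pos:
  assumes "q \<ge> 2" "\<beta> \<ge> 0" "NN > 0" and n: "n \<in> balanced_matrices NN q"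
  shows "overlap_class_weight NN q \<beta> K n > 0"
  using pair_edge_mean_pos[OF balanced_matrix_frequencies_Mstar[OF n] assms(1,2)] assms
  by (simp add: overlap_class_weight_def card_pairs_with_overlap[OF n] prod_pos)

lemma ln_overlap_class_weight_approx:
  assumes q: "q \<ge> 2" and \<beta>: "\<beta> \<ge> 0" and NN: "NN > 0" and n: "n \<in> balanced_matrices NN q"
  defines "N \<equiv> real (NN * q)"
  shows "\<bar>ln (overlap_class_weight NN q \<beta> K n) - N * phi2 \<beta> \<kappa> q (\<lambda>x. real (n x) / N)\<bar>
    \<le> N * ((\<beta> + 1) / 2 * \<bar>2 * real K / N - \<kappa>\<bar>) + real (q * q + 1) * (1 + ln (N + 1))"
proof -
  define p where "p = (\<lambda>x. real (n x) / N)"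
  define A where "A = {k\<in>balanced_configs NN q \<times> balanced_configs NN q. overlap (NN * q) (fst k) (snd k) = n}"
  have N: "N > 0" using NN q by (simp add: N_def)
  have p: "p \<in> Mstar q" using balanced_matrix_frequencies_Mstar[OF n] NN q by (simp add: p_def N_def)
  have A: "real (card A) > 0" unfolding A_def card_pairs_with_overlap[OF n] by (simp add: prod_pos)
  have G: "pair_edge_mean \<beta> q p > 0" by (rule pair_edge_mean_pos[OF p q \<beta>])
  have "ln (overlap_class_weight NN q \<beta> K n) - N * phi2 \<beta> (2 * real K / N) q p
      = ln (real (card A)) - N * entropy2 q p"
    using A G N by (simp add: overlap_class_weight_def A_def p_def N_def ln_mult ln_realpow
        phi2_eq_pair_edge_mean field_simps del: of_nat_mult)
  also have "\<bar>\<dots>\<bar> \<le> real (q * q + 1) * (1 + ln (N + 1))"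
    using ln_card_pairs_with_overlap_bounds[OF n] NN q by (simp add: A_def N_def p_def)
  finally have "\<bar>ln (overlap_class_weight NN q \<beta> K n) - N * phi2 \<beta> (2 * real K / N) q p\<bar>
    \<le> real (q * q + 1) * (1 + ln (N + 1))" .
  moreover have "\<bar>N * phi2 \<beta> (2 * real K / N) q p - N * phi2 \<beta> \<kappa> q p\<bar> \<le> N * ((\<beta> + 1) / 2 * \<bar>2 * real K / N - \<kappa>\<bar>)"
    using phi2_kappa_lipschitz[OF p q \<beta>] N by (simp add: abs_mult flip: right_diff_distrib)
  ultimately show ?thesis unfolding p_def by linarith
qed

lemma ln_cond_exp_Ztilde_sq_lower:
  assumes q: "q \<ge> 2" and \<beta>: "\<beta> \<ge> 0" and c: "c > 0" and NN: "NN > 0" and n: "n \<in> balanced_matrices NN q"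
  defines "N \<equiv> real (NN * q)"
  shows "N * (phi2 \<beta> \<kappa> q (\<lambda>x. real (n x) / N) - (\<beta> + 1) / 2 * \<bar>2 * real K / N - \<kappa>\<bar>)
      - real (q * q + 1) * (1 + ln (N + 1))
    \<le> ln (cond_exp_J (NN * q) c K (\<lambda>J. (Ztilde NN q \<beta> J)\<^sup>2))"
proof -
  have "overlap_class_weight NN q \<beta> K n \<le> (\<Sum>m\<in>balanced_matrices NN q. overlap_class_weight NN q \<beta> K m)"
    using n overlap_class_weight_pos[OF q \<beta> NN] finite_card_balanced_matrices(1)
    by (intro member_le_sum) (auto intro: less_imp_le)
  also have "\<dots> = cond_exp_J (NN * q) c K (\<lambda>J. (Ztilde NN q \<beta> J)\<^sup>2)"
    using c NN q by (simp add: cond_exp_Ztilde_sq_eq)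
  finally have "ln (overlap_class_weight NN q \<beta> K n) \<le> ln (cond_exp_J (NN * q) c K (\<lambda>J. (Ztilde NN q \<beta> J)\<^sup>2))"
    using overlap_class_weight_pos[OF q \<beta> NN n] by (rule ln_mono)
  then show ?thesis
    using ln_overlap_class_weight_approx[OF q \<beta> NN n, of K \<kappa>] unfolding N_def by (simp add: algebra_simps)
qed

lemma ln_cond_exp_Ztilde_sq_upper:
  assumes q: "q \<ge> 2" and \<beta>: "\<beta> \<ge> 0" and c: "c > 0" and NN: "NN > 0"
    and \<mu>: "\<mu> \<in> Mstar q" and max: "\<forall>\<nu>\<in>Mstar q. phi2 \<beta> \<kappa> q \<nu> \<le> phi2 \<beta> \<kappa> q \<mu>"
  defines "N \<equiv> real (NN * q)"
  shows "ln (cond_exp_J (NN * q) c K (\<lambda>J. (Ztilde NN q \<beta> J)\<^sup>2))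
    \<le> N * (phi2 \<beta> \<kappa> q \<mu> + (\<beta> + 1) / 2 * \<bar>2 * real K / N - \<kappa>\<bar>) + real (2 * q * q + 1) * (1 + ln (N + 1))"
proof -
  define E where "E = cond_exp_J (NN * q) c K (\<lambda>J. (Ztilde NN q \<beta> J)\<^sup>2)"
  define X where "X = N * (phi2 \<beta> \<kappa> q \<mu> + (\<beta> + 1) / 2 * \<bar>2 * real K / N - \<kappa>\<bar>) + real (q * q + 1) * (1 + ln (N + 1))"
  have N: "N > 0" using NN q by (simp add: N_def)
  have E: "E = (\<Sum>n\<in>balanced_matrices NN q. overlap_class_weight NN q \<beta> K n)"
    using c NN q by (simp add: E_def cond_exp_Ztilde_sq_eq)
  have class_le: "overlap_class_weight NN q \<beta> K n \<le> exp X" if n: "n \<in> balanced_matrices NN q" for n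
  proof -
    have "phi2 \<beta> \<kappa> q (\<lambda>x. real (n x) / N) \<le> phi2 \<beta> \<kappa> q \<mu>"
      using max balanced_matrix_frequencies_Mstar[OF n NN] q by (simp add: N_def)
    then have "N * phi2 \<beta> \<kappa> q (\<lambda>x. real (n x) / N) \<le> N * phi2 \<beta> \<kappa> q \<mu>"
      using N by (intro mult_left_mono) auto
    then have "ln (overlap_class_weight NN q \<beta> K n) \<le> X"
      using abs_le_D1[OF ln_overlap_class_weight_approx[OF q \<beta> NN n, of K \<kappa>, folded N_def]]
      unfolding X_def distrib_left by linarith
    have "overlap_class_weight NN q \<beta> K n = exp (ln (overlap_class_weight NN q \<beta> K n))"
      using overlap_class_weight_pos[OF q \<beta> NN n] by simp
    also have "\<dots> \<le> exp X" using \<open>ln (overlap_class_weight NN q \<beta> K n) \<le> X\<close> by simp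
    finally show ?thesis .
  qed
  obtain \<sigma> where \<sigma>: "\<sigma> \<in> balanced_configs NN q"
    using card_balanced_configs_pos[of NN q] by fastforce
  then have E_pos: "E > 0" unfolding E
    using overlap_class_weight_pos[OF q \<beta> NN] overlap_balanced_matrices[OF \<sigma> \<sigma>] finite_card_balanced_matrices(1)
    by (intro sum_pos) auto
  have "E \<le> real (card (balanced_matrices NN q)) * exp X"
    unfolding E using class_le by (rule sum_bounded_above)
  also have "\<dots> \<le> (N + 1) ^ (q * q) * exp X"
    using finite_card_balanced_matrices(2) by (intro mult_right_mono) (auto simp: N_def)
  finally have "ln E \<le> ln ((N + 1) ^ (q * q) * exp X)"
    using E_pos N by simp
  also have "\<dots> = real (q * q) * ln (N + 1) + X"
    using N by (simp add: ln_mult ln_realpow)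
  also have "\<dots> \<le> N * (phi2 \<beta> \<kappa> q \<mu> + (\<beta> + 1) / 2 * \<bar>2 * real K / N - \<kappa>\<bar>) + real (2 * q * q + 1) * (1 + ln (N + 1))"
    unfolding X_def by (simp add: algebra_simps)
  finally show ?thesis unfolding E_def .
qed

lemma system_size_asymptotics:
  assumes NN: "filterlim NN at_top sequentially" and q: "q > 0"
  shows "filterlim (\<lambda>n. real (NN n * q)) at_top sequentially"
    and "eventually (\<lambda>n. NN n > 0) sequentially"
    and "(\<lambda>n. (1 + ln (real (NN n * q) + 1)) / real (NN n * q)) \<longlonglongrightarrow> 0"
proof -
  have "filterlim (\<lambda>n. real (NN n)) at_top sequentially"
    by (rule filterlim_compose[OF filterlim_real_sequentially NN])
  moreover have "\<forall>n. real (NN n) \<le> real (NN n * q)" using q by (simp del: of_nat_mult)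
  ultimately show N: "filterlim (\<lambda>n. real (NN n * q)) at_top sequentially"
    by (blast intro: filterlim_at_top_mono always_eventually)
  show "eventually (\<lambda>n. NN n > 0) sequentially"
    using NN unfolding filterlim_at_top by (metis (mono_tags) eventually_mono Suc_le_eq)
  have "((\<lambda>x::real. (1 + ln (x + 1)) / x) \<longlongrightarrow> 0) at_top" by real_asymp
  with N show "(\<lambda>n. (1 + ln (real (NN n * q) + 1)) / real (NN n * q)) \<longlonglongrightarrow> 0"
    by (rule filterlim_compose[rotated])
qed

lemma balanced_matrices_approx:
  assumes \<nu>: "\<nu> \<in> Mstar q" and q: "q > 0" and "\<delta> > 0" and \<delta>: "\<And>x. x \<in> colour_pairs q \<Longrightarrow> \<delta> \<le> \<nu> x"
    and NN: "filterlim NN at_top sequentially"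
  obtains M where "eventually (\<lambda>n. M n \<in> balanced_matrices (NN n) q) sequentially"
    "\<And>x. x \<in> colour_pairs q \<Longrightarrow> (\<lambda>n. real (M n x) / real (NN n * q)) \<longlonglongrightarrow> \<nu> x"
proof -
  define near where "near = (\<lambda>n m. m \<in> balanced_matrices (NN n) q
      \<and> (\<forall>x\<in>colour_pairs q. \<bar>real (m x) - real (NN n * q) * \<nu> x\<bar> \<le> real q ^ 2))"
  define M where "M = (\<lambda>n. SOME m. near n m)"
  note NNq = system_size_asymptotics(1)[OF NN q]
  have "eventually (\<lambda>n. real q ^ 2 / \<delta> \<le> real (NN n * q)) sequentially"
    using NNq by (simp add: filterlim_at_top)
  then have large: "eventually (\<lambda>n. real q ^ 2 \<le> real (NN n * q) * \<delta>) sequentially"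
    using \<open>\<delta> > 0\<close> by (simp add: pos_divide_le_eq del: of_nat_mult)
  note pos = system_size_asymptotics(2)[OF NN q]
  have M: "eventually (\<lambda>n. near n (M n)) sequentially"
    using large
  proof eventually_elim
    case (elim n)
    then have "\<exists>m. near n m"
      using balanced_matrix_near[OF \<nu> q \<delta>, of "NN n"] unfolding near_def by (simp add: Bex_def)
    then show ?case unfolding M_def by (rule someI_ex)
  qed
  then show ?thesis
  proof (rule that[OF eventually_mono])
    fix x assume x: "x \<in> colour_pairs q"
    have "(\<lambda>n. real (M n x) / real (NN n * q) - \<nu> x) \<longlonglongrightarrow> 0"
    proof (rule Lim_null_comparison)
      show "eventually (\<lambda>n. norm (real (M n x) / real (NN n * q) - \<nu> x) \<le> real q ^ 2 / real (NN n * q)) sequentially"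
        using M pos
      proof eventually_elim
        case (elim n)
        then have "\<bar>real (M n x) - real (NN n * q) * \<nu> x\<bar> / real (NN n * q) \<le> real q ^ 2 / real (NN n * q)"
          using x by (intro divide_right_mono) (auto simp: near_def)
        moreover have "real (M n x) / real (NN n * q) - \<nu> x = (real (M n x) - real (NN n * q) * \<nu> x) / real (NN n * q)"
          using elim q by (simp add: field_simps)
        ultimately show ?case by (simp only: real_norm_def abs_divide)
      qed
      show "(\<lambda>n. real q ^ 2 / real (NN n * q)) \<longlonglongrightarrow> 0"
        by (rule real_tendsto_divide_at_top[OF tendsto_const NNq])
    qed
    then show "(\<lambda>n. real (M n x) / real (NN n * q)) \<longlonglongrightarrow> \<nu> x"
      by (simp add: LIM_zero_iff)
  qed (auto simp: near_def)
qed

lemma tendsto_ln_card_balanced_configs: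
  assumes NN: "filterlim NN at_top sequentially" and q: "q > 0"
  shows "(\<lambda>n. ln (real (card (balanced_configs (NN n) q))) / real (NN n * q)) \<longlonglongrightarrow> ln (real q)"
proof -
  define N where "N = (\<lambda>n. real (NN n * q))"
  have "(\<lambda>n. ln (real (card (balanced_configs (NN n) q))) / N n - ln (real q)) \<longlonglongrightarrow> 0"
  proof (rule Lim_null_comparison)
    show "eventually (\<lambda>n. norm (ln (real (card (balanced_configs (NN n) q))) / N n - ln (real q))
      \<le> real (q + 1) * ((1 + ln (N n + 1)) / N n)) sequentially"
      using system_size_asymptotics(2)[OF NN q]
    proof (rule eventually_mono)
      fix n assume "NN n > 0"
      then have "N n > 0" using q by (simp add: N_def)
      moreover have "\<bar>ln (real (card (balanced_configs (NN n) q))) - N n * ln (real q)\<bar>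
          \<le> real (q + 1) * (1 + ln (N n + 1))"
        using ln_card_balanced_configs_bounds[OF \<open>NN n > 0\<close> q] by (simp add: N_def)
      ultimately show "norm (ln (real (card (balanced_configs (NN n) q))) / N n - ln (real q))
        \<le> real (q + 1) * ((1 + ln (N n + 1)) / N n)"
        by (simp add: field_simps abs_divide)
    qed
    show "(\<lambda>n. real (q + 1) * ((1 + ln (N n + 1)) / N n)) \<longlonglongrightarrow> 0"
      using system_size_asymptotics(3)[OF NN q] unfolding N_def by (intro tendsto_mult_right_zero) simp
  qed
  then show ?thesis by (simp add: LIM_zero_iff N_def)
qed

theorem tendsto_ln_cond_exp_Ztilde:
  assumes q: "q \<ge> 2" and c: "c > 0"
    and NN: "filterlim NN at_top sequentially"
    and K: "(\<lambda>n. real (K n) / real (NN n * q)) \<longlonglongrightarrow> \<kappa> / 2"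
  shows "(\<lambda>n. ln (cond_exp_J (NN n * q) c (K n) (Ztilde (NN n) q \<beta>)) / real (NN n * q)) \<longlonglongrightarrow> Pfun \<beta> \<kappa> q"
proof -
  have q0: "q > 0" using q by simp
  define x0 where "x0 = 1 - (1 - exp (- \<beta>)) / real q"
  have "1 - exp (- \<beta>) < real q" using exp_gt_zero[of "- \<beta>"] q by linarith
  then have x0: "x0 > 0" using q0 by (simp add: x0_def divide_less_eq)
  have "(\<lambda>n. ln (real (card (balanced_configs (NN n) q))) / real (NN n * q) + real (K n) / real (NN n * q) * ln x0)
      \<longlonglongrightarrow> ln (real q) + \<kappa> / 2 * ln x0"
    by (intro tendsto_add tendsto_mult_right tendsto_ln_card_balanced_configs[OF NN q0] K)
  moreover have "eventually (\<lambda>n. ln (real (card (balanced_configs (NN n) q))) / real (NN n * q)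
        + real (K n) / real (NN n * q) * ln x0
      = ln (cond_exp_J (NN n * q) c (K n) (Ztilde (NN n) q \<beta>)) / real (NN n * q)) sequentially"
    using system_size_asymptotics(2)[OF NN q0]
  proof (rule eventually_mono)
    fix n assume "NN n > 0"
    then show "ln (real (card (balanced_configs (NN n) q))) / real (NN n * q) + real (K n) / real (NN n * q) * ln x0
      = ln (cond_exp_J (NN n * q) c (K n) (Ztilde (NN n) q \<beta>)) / real (NN n * q)"
      using q0 c x0 card_balanced_configs_pos[of "NN n" q]
      by (simp add: cond_exp_Ztilde_eq x0_def ln_mult ln_realpow add_divide_distrib del: of_nat_mult)
  qed
  ultimately show ?thesis
    by (simp add: tendsto_cong Pfun_def x0_def)
qed

lemma divide_le_add_divide:
  fixes N x :: real
  assumes "N > 0" "x \<le> N * a + b"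
  shows "x / N \<le> a + b / N"
  using assms by (simp add: field_simps)

lemma diff_divide_le_divide:
  fixes N x :: real
  assumes "N > 0" "N * a - b \<le> x"
  shows "a - b / N \<le> x / N"
proof -
  have "a - b / N = (N * a - b) / N" using assms(1) by (simp add: field_simps)
  then show ?thesis using assms by (simp add: divide_right_mono)
qed

lemma tendsto_moment_error:
  assumes NN: "filterlim NN at_top sequentially" and q: "q > 0"
    and K: "(\<lambda>n. real (K n) / real (NN n * q)) \<longlonglongrightarrow> \<kappa> / 2"
  shows "(\<lambda>n. (\<beta> + 1) / 2 * \<bar>2 * real (K n) / real (NN n * q) - \<kappa>\<bar>
      + C * (1 + ln (real (NN n * q) + 1)) / real (NN n * q)) \<longlonglongrightarrow> 0"
proof -
  have "(\<lambda>n. \<bar>2 * (real (K n) / real (NN n * q)) - \<kappa>\<bar>) \<longlonglongrightarrow> \<bar>2 * (\<kappa> / 2) - \<kappa>\<bar>"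
    by (intro tendsto_rabs tendsto_diff tendsto_mult tendsto_const K)
  then have "(\<lambda>n. (\<beta> + 1) / 2 * \<bar>2 * (real (K n) / real (NN n * q)) - \<kappa>\<bar>
      + C * ((1 + ln (real (NN n * q) + 1)) / real (NN n * q))) \<longlonglongrightarrow> 0"
    by (intro tendsto_add_zero tendsto_mult_right_zero system_size_asymptotics(3)[OF NN q]) simp
  then show ?thesis by simp
qed

lemma eventually_ln_cond_exp_Ztilde_sq_less:
  assumes q: "q \<ge> 2" and \<beta>: "\<beta> \<ge> 0" and c: "c > 0"
    and \<mu>: "\<mu> \<in> Mstar q" and max: "\<forall>\<nu>\<in>Mstar q. phi2 \<beta> \<kappa> q \<nu> \<le> phi2 \<beta> \<kappa> q \<mu>"
    and NN: "filterlim NN at_top sequentially"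
    and K: "(\<lambda>n. real (K n) / real (NN n * q)) \<longlonglongrightarrow> \<kappa> / 2"
    and a: "phi2 \<beta> \<kappa> q \<mu> < a"
  shows "eventually (\<lambda>n. ln (cond_exp_J (NN n * q) c (K n) (\<lambda>J. (Ztilde (NN n) q \<beta> J)\<^sup>2))
    / real (NN n * q) < a) sequentially"
proof -
  have q0: "q > 0" using q by simp
  have "(\<lambda>n. phi2 \<beta> \<kappa> q \<mu> + ((\<beta> + 1) / 2 * \<bar>2 * real (K n) / real (NN n * q) - \<kappa>\<bar>
      + real (2 * q * q + 1) * (1 + ln (real (NN n * q) + 1)) / real (NN n * q))) \<longlonglongrightarrow> phi2 \<beta> \<kappa> q \<mu> + 0"
    by (intro tendsto_add tendsto_const tendsto_moment_error[OF NN q0 K])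
  then have "eventually (\<lambda>n. phi2 \<beta> \<kappa> q \<mu> + ((\<beta> + 1) / 2 * \<bar>2 * real (K n) / real (NN n * q) - \<kappa>\<bar>
      + real (2 * q * q + 1) * (1 + ln (real (NN n * q) + 1)) / real (NN n * q)) < a) sequentially"
    using a by (intro order_tendstoD(2)) simp_all
  with system_size_asymptotics(2)[OF NN q0] show ?thesis
  proof eventually_elim
    case (elim n)
    then have "real (NN n * q) > 0" using q0 by simp
    then show ?case
      using elim(2) divide_le_add_divide[OF _ ln_cond_exp_Ztilde_sq_upper[OF q \<beta> c elim(1) \<mu> max, of "K n"]]
      by linarith
  qed
qed

lemma eventually_ln_cond_exp_Ztilde_sq_greater:
  assumes q: "q \<ge> 2" and \<beta>: "\<beta> \<ge> 0" and c: "c > 0"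
    and \<nu>: "\<nu> \<in> Mstar q" "\<delta> > 0" "\<And>x. x \<in> colour_pairs q \<Longrightarrow> \<delta> \<le> \<nu> x"
    and NN: "filterlim NN at_top sequentially"
    and K: "(\<lambda>n. real (K n) / real (NN n * q)) \<longlonglongrightarrow> \<kappa> / 2"
    and a: "a < phi2 \<beta> \<kappa> q \<nu>"
  shows "eventually (\<lambda>n. a < ln (cond_exp_J (NN n * q) c (K n) (\<lambda>J. (Ztilde (NN n) q \<beta> J)\<^sup>2))
    / real (NN n * q)) sequentially"
proof -
  have q0: "q > 0" using q by simp
  obtain M where M: "eventually (\<lambda>n. M n \<in> balanced_matrices (NN n) q) sequentially"
    and M_lim: "\<And>x. x \<in> colour_pairs q \<Longrightarrow> (\<lambda>n. real (M n x) / real (NN n * q)) \<longlonglongrightarrow> \<nu> x"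
    using balanced_matrices_approx[OF \<nu>(1) q0 \<nu>(2,3) NN] by blast
  have "(\<lambda>n. phi2 \<beta> \<kappa> q (\<lambda>x. real (M n x) / real (NN n * q))) \<longlonglongrightarrow> phi2 \<beta> \<kappa> q \<nu>"
    using M_lim Mstar_nonneg[OF \<nu>(1)] pair_edge_mean_pos[OF \<nu>(1) q \<beta>] by (intro tendsto_phi2) auto
  then have "(\<lambda>n. phi2 \<beta> \<kappa> q (\<lambda>x. real (M n x) / real (NN n * q))
      - ((\<beta> + 1) / 2 * \<bar>2 * real (K n) / real (NN n * q) - \<kappa>\<bar>
         + real (q * q + 1) * (1 + ln (real (NN n * q) + 1)) / real (NN n * q))) \<longlonglongrightarrow> phi2 \<beta> \<kappa> q \<nu> - 0"
    by (intro tendsto_diff tendsto_moment_error[OF NN q0 K])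
  then have "eventually (\<lambda>n. a < phi2 \<beta> \<kappa> q (\<lambda>x. real (M n x) / real (NN n * q))
      - ((\<beta> + 1) / 2 * \<bar>2 * real (K n) / real (NN n * q) - \<kappa>\<bar>
         + real (q * q + 1) * (1 + ln (real (NN n * q) + 1)) / real (NN n * q))) sequentially"
    using a by (intro order_tendstoD(1)) simp_all
  with system_size_asymptotics(2)[OF NN q0] M show ?thesis
  proof eventually_elim
    case (elim n)
    then have "real (NN n * q) > 0" using q0 by simp
    then show ?case
      using elim(3) diff_divide_le_divide[OF _ ln_cond_exp_Ztilde_sq_lower[OF q \<beta> c elim(1,2), of \<kappa> "K n"]]
      by linarith
  qed
qed

theorem tendsto_ln_cond_exp_Ztilde_sq:
  assumes q: "q \<ge> 2" and \<beta>: "\<beta> \<ge> 0" and c: "c > 0"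
    and \<mu>: "\<mu> \<in> Mstar q" and max: "\<forall>\<nu>\<in>Mstar q. phi2 \<beta> \<kappa> q \<nu> \<le> phi2 \<beta> \<kappa> q \<mu>"
    and NN: "filterlim NN at_top sequentially"
    and K: "(\<lambda>n. real (K n) / real (NN n * q)) \<longlonglongrightarrow> \<kappa> / 2"
  shows "(\<lambda>n. ln (cond_exp_J (NN n * q) c (K n) (\<lambda>J. (Ztilde (NN n) q \<beta> J)\<^sup>2)) / real (NN n * q))
    \<longlonglongrightarrow> phi2 \<beta> \<kappa> q \<mu>"
proof (rule order_tendstoI)
  fix a assume "phi2 \<beta> \<kappa> q \<mu> < a"
  then show "eventually (\<lambda>n. ln (cond_exp_J (NN n * q) c (K n) (\<lambda>J. (Ztilde (NN n) q \<beta> J)\<^sup>2))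
    / real (NN n * q) < a) sequentially"
    by (rule eventually_ln_cond_exp_Ztilde_sq_less[OF q \<beta> c \<mu> max NN K])
next
  fix a assume "a < phi2 \<beta> \<kappa> q \<mu>"
  then obtain \<nu> \<delta> where "\<nu> \<in> Mstar q" "\<delta> > 0" "\<And>x. x \<in> colour_pairs q \<Longrightarrow> \<delta> \<le> \<nu> x"
    and "a < phi2 \<beta> \<kappa> q \<nu>"
    using phi2_approx_by_positive[OF \<mu> q \<beta>] by blast
  then show "eventually (\<lambda>n. a < ln (cond_exp_J (NN n * q) c (K n) (\<lambda>J. (Ztilde (NN n) q \<beta> J)\<^sup>2))
    / real (NN n * q)) sequentially"
    by (intro eventually_ln_cond_exp_Ztilde_sq_greater[OF q \<beta> c _ _ _ NN K])
qed

theorem mainTheorem13: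
  fixes q :: nat and \<beta> c \<kappa> :: real
  assumes "q \<ge> 2" and "\<beta> \<ge> 0" and "c > 0" and "\<kappa> > 0"
  shows "(\<forall>NN K :: nat \<Rightarrow> nat.
            filterlim NN at_top sequentially \<and>
            ((\<lambda>n. real (K n) / real (NN n * q)) \<longlonglongrightarrow> \<kappa> / 2) \<longrightarrow>
            ((\<lambda>n. ln (cond_exp_J (NN n * q) c (K n) (Ztilde (NN n) q \<beta>)) / real (NN n * q))
               \<longlonglongrightarrow> Pfun \<beta> \<kappa> q))
       \<and> (\<exists>\<mu>\<in>Mstar q. (\<forall>\<nu>\<in>Mstar q. phi2 \<beta> \<kappa> q \<nu> \<le> phi2 \<beta> \<kappa> q \<mu>) \<and>
          (\<forall>NN K :: nat \<Rightarrow> nat.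
            filterlim NN at_top sequentially \<and>
            ((\<lambda>n. real (K n) / real (NN n * q)) \<longlonglongrightarrow> \<kappa> / 2) \<longrightarrow>
            ((\<lambda>n. ln (cond_exp_J (NN n * q) c (K n) (\<lambda>J. (Ztilde (NN n) q \<beta> J)^2)) / real (NN n * q))
               \<longlonglongrightarrow> phi2 \<beta> \<kappa> q \<mu>)))"
proof -
  obtain \<mu> where \<mu>: "\<mu> \<in> Mstar q" and max: "\<forall>\<nu>\<in>Mstar q. phi2 \<beta> \<kappa> q \<nu> \<le> phi2 \<beta> \<kappa> q \<mu>"
    using phi2_attains_max[OF assms(1,2)] by blast
  show ?thesis
    using tendsto_ln_cond_exp_Ztilde[OF assms(1,3)] tendsto_ln_cond_exp_Ztilde_sq[OF assms(1-3) \<mu> max] \<mu> max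
    by blast
qed

end
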